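(* Let $n\ge1$ and $\gamma=0$ (so $\beta=1$). Then for every $R>0$ the problem $$U''+\Big(\frac{n-1}{r}+\frac r2\Big)U'-\frac12U=0\ \text{ in }(R,\infty),\qquad U(R)=0,\qquad U'(R)=\sqrt2,$$ for $U\in C([R,\infty))\cap C^2((R,\infty))$ with values in $[0,\infty)$, has exactly one solution, given by $$U(r)=\frac{2\sqrt2}{R\,\mathbf W(\frac{R^2}{4})}e^{\frac{R^2-r^2}{4}}\Big[\mathbf M(\tfrac{n+1}{2},\tfrac n2,\tfrac{R^2}{4})\mathbf U(\tfrac{n+1}{2},\tfrac n2,\tfrac{r^2}{4})-\mathbf U(\tfrac{n+1}{2},\tfrac n2,\tfrac{R^2}{4})\mathbf M(\tfrac{n+1}{2},\tfrac n2,\tfrac{r^2}{4})\Big].$$ Furthermore, $U$ is positive and increasing in $(R,\infty)$ and $$\lim_{r\to\infty}\frac{U(r)}{r}=\frac{R^{n-1}}{2^{n-1/2}}\,\mathbf U(\tfrac{n+1}{2},\tfrac n2,\tfrac{R^2}{4}).$$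
   Context: $s\mapsto\mathbf M(a,b,s)$ is Kummer's confluent hypergeometric function $\sum_{k\ge0}\frac{(a)_k}{(b)_k}\frac{s^k}{k!}$ and $s\mapsto\mathbf U(a,b,s)$ is Tricomi's confluent hypergeometric function (the standard second solution of $sV''+(b-s)V'-aV=0$, with $\mathbf U(a,b,s)\sim s^{-a}$ as $s\to\infty$); $\mathbf W(s)$ is the Wronskian $\mathbf M\,\partial_s\mathbf U-\mathbf U\,\partial_s\mathbf M$ of $\mathbf M(\frac{n+1}{2},\frac n2,\cdot)$ and $\mathbf U(\frac{n+1}{2},\frac n2,\cdot)$. $U'(R)$ is the right derivative at $R$. *)

theory Defs
  imports "HOL-Analysis.Analysis"
begin

definition kummerM :: "real \<Rightarrow> real \<Rightarrow> real \<Rightarrow> real" where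
  "kummerM a b s = (\<Sum>k. pochhammer a k / pochhammer b k * s ^ k / fact k)"

text \<open>Tricomi's confluent hypergeometric function, via the standard integral
  representation (DLMF 13.4.4), valid for a > 0 and s > 0:
  U(a,b,s) = 1/Gamma(a) * integral_0^infty e^(-s t) t^(a-1) (1+t)^(b-a-1) dt.\<close>
definition tricomiU :: "real \<Rightarrow> real \<Rightarrow> real \<Rightarrow> real" where
  "tricomiU a b s = (1 / Gamma a) *
     integral {0..} (\<lambda>t. exp (- s * t) * t powr (a - 1) * (1 + t) powr (b - a - 1))"

definition wronskW :: "nat \<Rightarrow> real \<Rightarrow> real" where
  "wronskW n s =
     kummerM ((real n + 1) / 2) (real n / 2) s * deriv (tricomiU ((real n + 1) / 2) (real n / 2)) s
   - tricomiU ((real n + 1) / 2) (real n / 2) s * deriv (kummerM ((real n + 1) / 2) (real n / 2)) s"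

definition is_solution :: "nat \<Rightarrow> real \<Rightarrow> (real \<Rightarrow> real) \<Rightarrow> bool" where
  "is_solution n R U \<longleftrightarrow>
     continuous_on {R..} U \<and>
     (\<exists>U1 U2. (\<forall>r>R. (U has_real_derivative U1 r) (at r) \<and> (U1 has_real_derivative U2 r) (at r)
                      \<and> U2 r + ((real n - 1) / r + r / 2) * U1 r - U r / 2 = 0)
             \<and> continuous_on {R<..} U2) \<and>
     (\<forall>r\<ge>R. U r \<ge> 0) \<and>
     U R = 0 \<and>
     (U has_real_derivative sqrt 2) (at_right R)"

definition explicitU :: "nat \<Rightarrow> real \<Rightarrow> real \<Rightarrow> real" where
  "explicitU n R r =
     2 * sqrt 2 / (R * wronskW n (R^2/4)) * exp ((R^2 - r^2) / 4) *
     (kummerM ((real n + 1) / 2) (real n / 2) (R^2/4) * tricomiU ((real n + 1) / 2) (real n / 2) (r^2/4)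
      - tricomiU ((real n + 1) / 2) (real n / 2) (R^2/4) * kummerM ((real n + 1) / 2) (real n / 2) (r^2/4))"

end

theory Submission
  imports Defs "HOL-Real_Asymp.Real_Asymp"
begin

text \<open>
  The substitution y(r) = exp(-r^2/4) w(r^2/4) turns the radial equation into Kummer's equation
  s w'' + (n/2 - s) w' - (n+1)/2 w = 0, whose solutions are spanned by M (a power series) and
  U (a Laplace-type integral). The explicit solution is the combination of M and U vanishing at
  R^2/4, scaled by the Wronskian so that its slope at R is sqrt 2. Its derivative stays positive,
  since at a first zero r0 of y' the equation would give y''(r0) = y(r0)/2 > 0. Uniqueness: the
  difference w of two solutions has w(R) = 0 and w'(R+) = 0, and the energy
  (w^2 + w'^2) exp(-3r/2) does not increase, so w vanishes. For the growth at infinity, the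
  Wronskian of y with the decaying solution psi(r) = exp(-r^2/4) U(r^2/4) is a constant multiple
  of r^(1-n) exp(-r^2/4); L'Hopital's rule for (y/psi)/(r/psi), together with the asymptotics
  s^a U(s) -> 1 and s^(a+1) U'(s) -> -a, then gives the limit of y(r)/r.
\<close>

section \<open>Real analysis\<close>

lemma tendsto_at_right_if_deriv_bounded:
  fixes f f' :: "real \<Rightarrow> real"
  assumes "a < b"
    and deriv: "\<And>x. x \<in> {a<..<b} \<Longrightarrow> (f has_real_derivative f' x) (at x)"
    and bound: "\<And>x. x \<in> {a<..<b} \<Longrightarrow> \<bar>f' x\<bar> \<le> B"
  obtains L where "(f \<longlongrightarrow> L) (at_right a)"
proof -
  have "B-lipschitz_on {a<..<b} f"
  proof (rule lipschitz_onI)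
    show "dist (f x) (f y) \<le> B * dist x y" if "x \<in> {a<..<b}" "y \<in> {a<..<b}" for x y
      using field_differentiable_bound[of "{a<..<b}" f f' B x y] deriv bound that
      by (auto simp: dist_real_def has_field_derivative_at_within)
    show "0 \<le> B"
      using bound[of "(a + b) / 2"] \<open>a < b\<close> by auto
  qed
  then have "uniformly_continuous_on {a<..<b} f"
    by (rule lipschitz_on_uniformly_continuous)
  moreover have "a \<in> closure {a<..<b}" using \<open>a < b\<close> by simp
  ultimately obtain L where "(f \<longlongrightarrow> L) (at a within {a<..<b})"
    by (rule uniformly_continuous_on_extension_at_closure)
  moreover have "at a within {a<..<b} = at_right a"
    by (rule at_within_nhd[of a "{..<b}"]) (use \<open>a < b\<close> in auto)
  ultimately show ?thesis using that by simp
qed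

lemma has_real_derivative_at_right_if_tendsto_deriv:
  fixes f f' :: "real \<Rightarrow> real"
  assumes "(f \<longlongrightarrow> f a) (at_right a)"
    and "\<forall>\<^sub>F x in at_right a. (f has_real_derivative f' x) (at x)"
    and "(f' \<longlongrightarrow> L) (at_right a)"
  shows "(f has_real_derivative L) (at_right a)"
proof -
  have "((\<lambda>x. (f x - f a) / (x - a)) \<longlongrightarrow> L) (at_right a)"
  proof (rule lhopital_right[where f' = f' and g' = "\<lambda>_. 1"])
    show "((\<lambda>x. f x - f a) \<longlongrightarrow> 0) (at_right a)"
      using assms(1) by (simp add: LIM_zero)
    show "((\<lambda>x. x - a) \<longlongrightarrow> 0) (at_right a)"
      by (rule tendsto_eq_intros refl | simp)+
    show "\<forall>\<^sub>F x in at_right a. x - a \<noteq> 0"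
      using eventually_at_right_less[of a] by eventually_elim simp
    show "\<forall>\<^sub>F x in at_right a. ((\<lambda>x. f x - f a) has_real_derivative f' x) (at x)"
      using assms(2) by eventually_elim (auto intro!: derivative_eq_intros)
    show "\<forall>\<^sub>F x in at_right a. ((\<lambda>x. x - a) has_real_derivative 1) (at x)"
      by (auto intro!: always_eventually derivative_eq_intros)
  qed (use assms(3) in simp_all)
  then show ?thesis by (simp add: has_field_derivative_iff)
qed

lemma strict_mono_on_if_deriv_pos:
  fixes y y' :: "real \<Rightarrow> real"
  assumes "\<And>r. R \<le> r \<Longrightarrow> (y has_real_derivative y' r) (at r)" and "\<And>r. R \<le> r \<Longrightarrow> y' r > 0"
  shows "strict_mono_on {R..} y"
proof (rule strict_mono_onI)
  fix r t assume "r \<in> {R..}" "t \<in> {R..}" "r < t"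
  show "y r < y t"
  proof (rule DERIV_pos_imp_increasing[OF \<open>r < t\<close>])
    fix x assume "r \<le> x" "x \<le> t"
    with \<open>r \<in> {R..}\<close> have "R \<le> x" by simp
    with assms show "\<exists>d. (y has_real_derivative d) (at x) \<and> 0 < d" by blast
  qed
qed

lemma first_zero_after:
  fixes f :: "real \<Rightarrow> real"
  assumes cont: "continuous_on {a..} f" and "f a > 0" and "a \<le> r" and "f r \<le> 0"
  obtains r0 where "a < r0" "f r0 = 0" "\<And>t. a \<le> t \<Longrightarrow> t < r0 \<Longrightarrow> f t > 0"
proof -
  define S where "S = {a..} \<inter> f -` {..0}"
  have "S \<noteq> {}" "bdd_below S"
    using assms by (auto simp: S_def intro: bdd_belowI[of _ a])
  moreover have "closed S"
    unfolding S_def by (rule continuous_closed_preimage[OF cont]) auto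
  ultimately have "Inf S \<in> S" by (rule closed_contains_Inf)
  then have "a \<le> Inf S" "f (Inf S) \<le> 0" by (auto simp: S_def)
  have before: "f t > 0" if "a \<le> t" "t < Inf S" for t
    using cInf_lower[of t S] \<open>bdd_below S\<close> that by (force simp: S_def)
  have "a < Inf S" using \<open>a \<le> Inf S\<close> \<open>f (Inf S) \<le> 0\<close> \<open>f a > 0\<close> by (cases "a = Inf S") auto
  moreover have "f (Inf S) = 0"
  proof (rule ccontr)
    assume "f (Inf S) \<noteq> 0"
    have "continuous_on {a..Inf S} f"
      using cont by (rule continuous_on_subset) auto
    then obtain x where "a \<le> x" "x \<le> Inf S" "f x = 0"
      using IVT2'[of f "Inf S" 0 a] \<open>f (Inf S) \<le> 0\<close> \<open>f a > 0\<close> \<open>a \<le> Inf S\<close> by auto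
    moreover have "x \<noteq> Inf S" using \<open>f x = 0\<close> \<open>f (Inf S) \<noteq> 0\<close> by auto
    ultimately show False using before[of x] by simp
  qed
  ultimately show ?thesis using before by (rule that)
qed

lemma filterlim_divide_nonincreasing_at_top:
  fixes \<psi> \<psi>' :: "real \<Rightarrow> real"
  assumes "\<And>r. r0 \<le> r \<Longrightarrow> (\<psi> has_real_derivative \<psi>' r) (at r) \<and> 0 < \<psi> r \<and> \<psi>' r \<le> 0"
  shows "filterlim (\<lambda>r. r / \<psi> r) at_top at_top"
proof -
  have \<psi>_le: "\<psi> r \<le> \<psi> r0" if "r0 \<le> r" for r
    using that by (rule DERIV_nonpos_imp_nonincreasing) (use assms in force)
  have "\<forall>\<^sub>F r in at_top. r * inverse (\<psi> r0) \<le> r / \<psi> r"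
    using eventually_ge_at_top[of "max r0 0"]
    by eventually_elim (use assms \<psi>_le in \<open>auto simp: field_simps intro: mult_left_mono\<close>)
  moreover have "filterlim (\<lambda>r. r * inverse (\<psi> r0)) at_top at_top"
    using assms[of r0] by (auto intro!: filterlim_at_top_mult_tendsto_pos filterlim_ident)
  ultimately show ?thesis
    by (rule filterlim_at_top_mono[rotated])
qed

text \<open>L'Hopital's rule for (y/psi)/(r/psi): a positive nonincreasing weight psi makes r/psi unbounded.\<close>

lemma lhospital_divide_ident_at_top:
  fixes y y' \<psi> \<psi>' :: "real \<Rightarrow> real"
  assumes ev: "\<forall>\<^sub>F r in at_top. (y has_real_derivative y' r) (at r) \<and> (\<psi> has_real_derivative \<psi>' r) (at r)
      \<and> 0 < \<psi> r \<and> \<psi>' r \<le> 0"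
    and lim: "((\<lambda>r. (y' r * \<psi> r - y r * \<psi>' r) / (\<psi> r - r * \<psi>' r)) \<longlongrightarrow> L) at_top"
  shows "((\<lambda>r. y r / r) \<longlongrightarrow> L) at_top"
proof -
  obtain r0 where r0: "r0 > 0" and
    H: "\<And>r. r0 \<le> r \<Longrightarrow> (y has_real_derivative y' r) (at r) \<and> (\<psi> has_real_derivative \<psi>' r) (at r)
      \<and> 0 < \<psi> r \<and> \<psi>' r \<le> 0"
    using eventually_conj[OF ev eventually_gt_at_top[of 0]] unfolding eventually_at_top_linorder
    by (metis linorder_not_le max.cobounded1 max.cobounded2 order.strict_trans1)
  have nz: "\<psi> r \<noteq> 0" "(\<psi> r - r * \<psi>' r) / (\<psi> r * \<psi> r) \<noteq> 0" if "r0 \<le> r" for r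
  proof -
    from H[OF that] r0 that have "0 < \<psi> r" "r * \<psi>' r \<le> 0" by (auto simp: mult_nonneg_nonpos)
    then show "\<psi> r \<noteq> 0" "(\<psi> r - r * \<psi>' r) / (\<psi> r * \<psi> r) \<noteq> 0" by simp_all
  qed
  have "((\<lambda>r. (y r / \<psi> r) / (r / \<psi> r)) \<longlongrightarrow> L) at_top"
  proof (rule lhospital_at_top_at_top)
    show "filterlim (\<lambda>r. r / \<psi> r) at_top at_top"
      by (rule filterlim_divide_nonincreasing_at_top[of r0 _ \<psi>']) (use H in auto)
    show "\<forall>\<^sub>F r in at_top. (\<psi> r - r * \<psi>' r) / (\<psi> r * \<psi> r) \<noteq> 0"
      using eventually_ge_at_top[of r0] by eventually_elim (rule nz)
    show "\<forall>\<^sub>F r in at_top. ((\<lambda>r. y r / \<psi> r) has_real_derivative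
        (y' r * \<psi> r - y r * \<psi>' r) / (\<psi> r * \<psi> r)) (at r)"
      using eventually_ge_at_top[of r0] by eventually_elim (auto intro!: DERIV_divide dest!: H)
    show "\<forall>\<^sub>F r in at_top. ((\<lambda>r. r / \<psi> r) has_real_derivative
        (\<psi> r - r * \<psi>' r) / (\<psi> r * \<psi> r)) (at r)"
      using eventually_ge_at_top[of r0]
    proof eventually_elim
      case (elim r)
      then show ?case using DERIV_divide[OF DERIV_ident, of \<psi> "\<psi>' r" r] H[OF elim] by simp
    qed
    show "((\<lambda>r. (y' r * \<psi> r - y r * \<psi>' r) / (\<psi> r * \<psi> r) / ((\<psi> r - r * \<psi>' r) / (\<psi> r * \<psi> r)))
        \<longlongrightarrow> L) at_top"
      by (rule Lim_transform_eventually[OF lim])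
        (use eventually_ge_at_top[of r0] in \<open>eventually_elim, simp add: nz divide_divide_eq_right\<close>)
  qed
  moreover have "\<forall>\<^sub>F r in at_top. (y r / \<psi> r) / (r / \<psi> r) = y r / r"
    using eventually_ge_at_top[of r0] by eventually_elim (simp add: nz)
  ultimately show ?thesis
    by (rule Lim_transform_eventually)
qed

lemma powr_eq_two_powr_mult_quarter_square_powr:
  fixes r m :: real
  assumes "r > 0"
  shows "r powr m = 2 powr m * (r\<^sup>2 / 4) powr (m / 2)"
proof -
  have "r\<^sup>2 / 4 = (r / 2) powr 2" using assms by (simp add: powr_numeral power_divide)
  then have "(r\<^sup>2 / 4) powr (m / 2) = (r / 2) powr m" by (simp add: powr_powr)
  then show ?thesis using assms by (simp add: powr_divide)
qed

lemma exp_linear_remainder_le: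
  fixes x s t :: real
  assumes "t > 0" and "\<bar>x - s\<bar> \<le> s / 2"
  shows "\<bar>exp (- x * t) - exp (- s * t) + (x - s) * (t * exp (- s * t))\<bar>
    \<le> (x - s)\<^sup>2 * t\<^sup>2 * exp (- (s / 2) * t)"
proof -
  define z where "z = (s - x) * t"
  obtain \<xi> where \<xi>: "\<bar>\<xi>\<bar> \<le> \<bar>z\<bar>" "exp z = (\<Sum>m<2. z ^ m / fact m) + exp \<xi> / fact 2 * z\<^sup>2"
    using Maclaurin_exp_le[of z 2] by blast
  have exp_z: "exp z - 1 - z = exp \<xi> / 2 * z\<^sup>2"
    using \<xi>(2) by (simp add: numeral_2_eq_2)
  have A: "exp (- x * t) = exp (- s * t) * exp z"
    by (simp add: z_def algebra_simps flip: exp_add)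
  have B: "(x - s) * (t * exp (- s * t)) = - z * exp (- s * t)"
    by (simp add: z_def algebra_simps)
  have "exp (- x * t) - exp (- s * t) + (x - s) * (t * exp (- s * t))
      = exp (- s * t) * (exp z - 1 - z)"
    unfolding A B by (simp add: algebra_simps)
  also have "\<dots> = exp (- s * t) * (exp \<xi> / 2 * z\<^sup>2)"
    unfolding exp_z ..
  finally have eq: "exp (- x * t) - exp (- s * t) + (x - s) * (t * exp (- s * t))
      = exp (- s * t) * (exp \<xi> / 2 * z\<^sup>2)" .
  have "0 \<le> exp (- s * t) * (exp \<xi> / 2 * z\<^sup>2)" by simp
  with eq have "\<bar>exp (- x * t) - exp (- s * t) + (x - s) * (t * exp (- s * t))\<bar>
      = exp (- s * t) * (exp \<xi> / 2 * z\<^sup>2)"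
    by (metis abs_of_nonneg)
  also have "\<dots> \<le> (exp (- s * t) * exp \<bar>z\<bar>) * z\<^sup>2"
  proof -
    have "exp \<xi> \<le> exp \<bar>z\<bar>" using \<xi>(1) by (meson abs_ge_self exp_le_cancel_iff order_trans)
    then have "exp \<xi> / 2 \<le> exp \<bar>z\<bar>" using exp_gt_zero[of \<xi>] by linarith
    then have "exp \<xi> / 2 * z\<^sup>2 \<le> exp \<bar>z\<bar> * z\<^sup>2" by (rule mult_right_mono) simp
    from mult_left_mono[OF this, of "exp (- s * t)"] show ?thesis by (simp add: mult.assoc)
  qed
  also have "\<dots> \<le> exp (- (s / 2) * t) * z\<^sup>2"
  proof (rule mult_right_mono)
    have "\<bar>z\<bar> \<le> s / 2 * t"
      using assms by (simp add: z_def abs_mult abs_minus_commute mult_right_mono)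
    then show "exp (- s * t) * exp \<bar>z\<bar> \<le> exp (- (s / 2) * t)" by (simp flip: exp_add)
  qed simp
  finally show ?thesis
    by (simp add: z_def power_mult_distrib power2_commute mult_ac)
qed

lemma one_add_powr_le_1: "0 \<le> t \<Longrightarrow> q \<le> 0 \<Longrightarrow> (1 + t) powr q \<le> (1::real)"
  using powr_mono[of q 0 "1 + t"] by simp

lemma one_sub_two_mult_le_one_add_powr:
  fixes t q :: real
  assumes "0 \<le> t" "-2 \<le> q"
  shows "1 - 2 * t \<le> (1 + t) powr q"
proof -
  have "(1 - 2 * t) * (1 + t)\<^sup>2 = 1 - t\<^sup>2 * (3 + 2 * t)"
    by (simp add: power2_eq_square algebra_simps)
  also have "\<dots> \<le> 1" using assms by simp
  finally have "1 - 2 * t \<le> 1 / (1 + t)\<^sup>2"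
    using assms by (simp add: pos_le_divide_eq)
  also have "\<dots> = (1 + t) powr (-2)"
    using assms by (simp add: powr_minus powr_numeral divide_inverse)
  also have "\<dots> \<le> (1 + t) powr q" using assms by (intro powr_mono) auto
  finally show ?thesis .
qed

lemma has_integral_Ioi_stretch:
  fixes f :: "real \<Rightarrow> real"
  assumes f: "(f has_integral I) {0<..}" and nonneg: "\<And>t. t > 0 \<Longrightarrow> 0 \<le> f t" and s: "s > 0"
  shows "((\<lambda>t. f (s * t)) has_integral I / s) {0<..}"
proof -
  define F where "F = (\<lambda>t::real. if t \<in> {0<..} then f t else 0)"
  have "(F has_integral I) UNIV"
    using f unfolding F_def by (subst has_integral_restrict_UNIV)
  moreover have F_nonneg: "\<And>t. 0 \<le> F t" using nonneg by (simp add: F_def)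
  ultimately have F_meas: "F \<in> borel_measurable lebesgue"
    and F_int: "(\<integral>\<^sup>+ t. ennreal (F t) \<partial>lebesgue) = ennreal I"
    by (auto simp: has_integral_iff_nn_integral_lebesgue)
  have "I \<ge> 0" using has_integral_nonneg[OF f] nonneg by auto
  have G_meas: "(\<lambda>t. F (0 + s * t)) \<in> borel_measurable lebesgue"
    using borel_measurable_affine[OF F_meas, of s 0] s by simp
  have "ennreal I = ennreal s * (\<integral>\<^sup>+ t. ennreal (F (0 + s * t)) \<partial>lebesgue)"
    using nn_integral_real_affine_lebesgue[of "\<lambda>t. ennreal (F t)" s 0] F_meas s F_int by auto
  then have "(\<integral>\<^sup>+ t. ennreal (F (0 + s * t)) \<partial>lebesgue) = ennreal I / ennreal s"
    using s by (simp add: mult.commute[of "ennreal s"] ennreal_mult_divide_eq)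
  also have "\<dots> = ennreal (I / s)"
    using s \<open>I \<ge> 0\<close> by (simp add: divide_ennreal)
  finally have "((\<lambda>t. F (0 + s * t)) has_integral I / s) UNIV"
    using G_meas F_nonneg s \<open>I \<ge> 0\<close> by (subst has_integral_iff_nn_integral_lebesgue) auto
  moreover have "F (0 + s * t) = (if t \<in> {0<..} then f (s * t) else 0)" for t
    using s by (simp add: F_def zero_less_mult_iff)
  ultimately show ?thesis
    using has_integral_restrict_UNIV[of "{0<..}" "\<lambda>t. f (s * t)" "I / s"] by simp
qed

lemma has_integral_powr_exp_Gamma:
  fixes c s :: real
  assumes c: "c > 0" and s: "s > 0"
  shows "((\<lambda>t. t powr (c - 1) * exp (- s * t)) has_integral Gamma c / s powr c) {0<..}"
proof -
  have "((\<lambda>t. t powr (c - 1) / exp t) has_integral Gamma c) {0..}"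
    by (rule Gamma_integral_real[OF c])
  then have "((\<lambda>t. t powr (c - 1) / exp t) has_integral Gamma c) {0<..}"
    by (subst has_integral_spike_set_eq) (auto intro: negligible_subset[OF negligible_sing[of 0]])
  from has_integral_Ioi_stretch[OF this _ s]
  have "((\<lambda>t. (s * t) powr (c - 1) / exp (s * t)) has_integral Gamma c / s) {0<..}"
    by simp
  moreover have "inverse (s powr (c - 1)) * (Gamma c / s) = Gamma c / s powr c"
    using s by (simp add: powr_diff field_simps)
  ultimately have "((\<lambda>t. inverse (s powr (c - 1)) * ((s * t) powr (c - 1) / exp (s * t)))
      has_integral Gamma c / s powr c) {0<..}"
    by (metis has_integral_mult_right)
  then show ?thesis
    by (rule has_integral_cong[THEN iffD1, rotated])
      (use s in \<open>auto simp: powr_mult exp_minus powr_diff field_simps\<close>)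
qed

lemma integrable_on_Ioi_if_dominated:
  fixes f g :: "real \<Rightarrow> real"
  assumes "continuous_on {0<..} f" "g integrable_on {0<..}" "\<And>t. t > 0 \<Longrightarrow> \<bar>f t\<bar> \<le> g t"
  shows "f integrable_on {0<..}"
proof (rule measurable_bounded_by_integrable_imp_integrable[OF _ assms(2)])
  show "f \<in> borel_measurable (lebesgue_on {0<..})"
    by (rule continuous_imp_measurable_on_sets_lebesgue[OF assms(1)]) auto
qed (use assms(3) in auto)

lemma integral_Ioi_pos:
  fixes f :: "real \<Rightarrow> real"
  assumes cont: "continuous_on {0<..} f" and int: "f integrable_on {0<..}"
    and pos: "\<And>t. t > 0 \<Longrightarrow> f t > 0"
  shows "integral {0<..} f > 0"
proof -
  have cont12: "continuous_on {1..2} f" using cont by (rule continuous_on_subset) auto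
  obtain x where x: "x \<in> {1..2}" "\<And>y. y \<in> {1..2} \<Longrightarrow> f x \<le> f y"
    using continuous_attains_inf[OF compact_Icc _ cont12] by auto
  have "0 < integral {1..2::real} (\<lambda>_. f x)" using x pos by simp
  also have "\<dots> \<le> integral {1..2} f"
    by (rule integral_le) (use x cont12 integrable_continuous_interval in auto)
  also have "\<dots> \<le> integral {0<..} f"
    by (rule integral_subset_le) (use int pos cont12 integrable_continuous_interval in \<open>auto simp: less_imp_le\<close>)
  finally show ?thesis .
qed

lemma integral_Ioi_derivative_eq_zero:
  fixes G g :: "real \<Rightarrow> real"
  assumes deriv: "\<And>t. t > 0 \<Longrightarrow> (G has_real_derivative g t) (at t)"
    and cont: "continuous_on {0<..} g" and int: "g absolutely_integrable_on {0<..}"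
    and G_0: "(G \<longlongrightarrow> 0) (at_right 0)" and G_inf: "(G \<longlongrightarrow> 0) at_top"
  shows "integral {0<..} g = 0"
proof -
  have "(\<lambda>x. indicat_real {0<..} x *\<^sub>R g x) \<in> borel_measurable borel"
    by (rule borel_measurable_continuous_on_indicator[OF _ cont]) auto
  with int have g_int: "set_integrable lborel {0<..} g"
    unfolding set_integrable_def by (subst (asm) integrable_completion) auto
  have Ioi: "einterval 0 \<infinity> = {0::real<..}"
    by (auto simp: einterval_def zero_ereal_def)
  have "(LBINT x=0..\<infinity>. g x) = 0 - 0"
  proof (rule interval_integral_FTC_integrable[where F = G])
    show "(G has_vector_derivative g x) (at x)" if "0 < ereal x" "ereal x < \<infinity>" for x
      using deriv[of x] that by (simp add: has_real_derivative_iff_has_vector_derivative zero_ereal_def)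
    show "isCont g x" if "0 < ereal x" "ereal x < \<infinity>" for x
      using cont that by (simp add: continuous_on_eq_continuous_at zero_ereal_def)
    show "set_integrable lborel (einterval 0 \<infinity>) g"
      unfolding Ioi by (rule g_int)
    show "((G \<circ> real_of_ereal) \<longlongrightarrow> 0) (at_right 0)"
      unfolding zero_ereal_def ereal_tendsto_simps by (rule G_0)
    show "((G \<circ> real_of_ereal) \<longlongrightarrow> 0) (at_left \<infinity>)"
      unfolding ereal_tendsto_simps by (rule G_inf)
  qed simp
  then show ?thesis
    using interval_integral_eq_integral'[of 0 "\<infinity>" g] g_int Ioi by simp
qed

section \<open>Kummer's equation and the radial equation\<close>

definition kummer_ode :: "real \<Rightarrow> real \<Rightarrow> real set \<Rightarrow> (real \<Rightarrow> real) \<Rightarrow> (real \<Rightarrow> real) \<Rightarrow> (real \<Rightarrow> real) \<Rightarrow> bool"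
  where "kummer_ode a b I w w' w'' \<longleftrightarrow>
    (\<forall>s\<in>I. (w has_real_derivative w' s) (at s) \<and> (w' has_real_derivative w'' s) (at s)
       \<and> s * w'' s + (b - s) * w' s - a * w s = 0)"

lemma kummer_ode_subset: "kummer_ode a b I w w' w'' \<Longrightarrow> J \<subseteq> I \<Longrightarrow> kummer_ode a b J w w' w''"
  unfolding kummer_ode_def by blast

lemma kummer_ode_lincomb:
  assumes u: "kummer_ode a b I u u' u''" and v: "kummer_ode a b I v v' v''"
  shows "kummer_ode a b I (\<lambda>s. \<alpha> * u s - \<beta> * v s) (\<lambda>s. \<alpha> * u' s - \<beta> * v' s) (\<lambda>s. \<alpha> * u'' s - \<beta> * v'' s)"
  unfolding kummer_ode_def
proof (intro ballI conjI)
  fix s assume "s \<in> I"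
  then have U: "(u has_real_derivative u' s) (at s)" "(u' has_real_derivative u'' s) (at s)"
      "s * u'' s + (b - s) * u' s - a * u s = 0"
    and V: "(v has_real_derivative v' s) (at s)" "(v' has_real_derivative v'' s) (at s)"
      "s * v'' s + (b - s) * v' s - a * v s = 0"
    using u v unfolding kummer_ode_def by auto
  show "((\<lambda>s. \<alpha> * u s - \<beta> * v s) has_real_derivative \<alpha> * u' s - \<beta> * v' s) (at s)"
    "((\<lambda>s. \<alpha> * u' s - \<beta> * v' s) has_real_derivative \<alpha> * u'' s - \<beta> * v'' s) (at s)"
    using U(1,2) V(1,2) by (auto intro!: derivative_eq_intros)
  have "s * (\<alpha> * u'' s - \<beta> * v'' s) + (b - s) * (\<alpha> * u' s - \<beta> * v' s) - a * (\<alpha> * u s - \<beta> * v s)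
      = \<alpha> * (s * u'' s + (b - s) * u' s - a * u s) - \<beta> * (s * v'' s + (b - s) * v' s - a * v s)"
    by (simp add: algebra_simps)
  then show "s * (\<alpha> * u'' s - \<beta> * v'' s) + (b - s) * (\<alpha> * u' s - \<beta> * v' s) - a * (\<alpha> * u s - \<beta> * v s) = 0"
    using U(3) V(3) by simp
qed

definition radial_ode :: "real \<Rightarrow> real set \<Rightarrow> (real \<Rightarrow> real) \<Rightarrow> (real \<Rightarrow> real) \<Rightarrow> (real \<Rightarrow> real) \<Rightarrow> bool"
  where "radial_ode n I y y' y'' \<longleftrightarrow>
    (\<forall>r\<in>I. (y has_real_derivative y' r) (at r) \<and> (y' has_real_derivative y'' r) (at r)
       \<and> y'' r + ((n - 1) / r + r / 2) * y' r - y r / 2 = 0)"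

lemma radial_odeD:
  assumes "radial_ode n I y y' y''" "r \<in> I"
  shows "(y has_real_derivative y' r) (at r)" "(y' has_real_derivative y'' r) (at r)"
    and "y'' r = y r / 2 - ((n - 1) / r + r / 2) * y' r"
  using assms unfolding radial_ode_def by auto

lemma radial_ode_subset: "radial_ode n I y y' y'' \<Longrightarrow> J \<subseteq> I \<Longrightarrow> radial_ode n J y y' y''"
  unfolding radial_ode_def by blast

lemma radial_ode_cmult:
  assumes "radial_ode n I y y' y''"
  shows "radial_ode n I (\<lambda>r. c * y r) (\<lambda>r. c * y' r) (\<lambda>r. c * y'' r)"
  unfolding radial_ode_def
proof (intro ballI conjI)
  fix r assume "r \<in> I"
  note D = radial_odeD[OF assms this]
  show "((\<lambda>r. c * y r) has_real_derivative c * y' r) (at r)"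
    "((\<lambda>r. c * y' r) has_real_derivative c * y'' r) (at r)"
    using D(1,2) by (auto intro: DERIV_cmult)
  show "c * y'' r + ((n - 1) / r + r / 2) * (c * y' r) - c * y r / 2 = 0"
    unfolding D(3) by (simp add: algebra_simps)
qed

lemma radial_ode_diff:
  assumes "radial_ode n I y y' y''" "radial_ode n I z z' z''"
  shows "radial_ode n I (\<lambda>r. y r - z r) (\<lambda>r. y' r - z' r) (\<lambda>r. y'' r - z'' r)"
  using assms unfolding radial_ode_def by (auto intro: DERIV_diff simp: algebra_simps diff_divide_distrib)

lemma radial_ode_continuous_on:
  assumes "radial_ode n I y y' y''"
  shows "continuous_on I y" "continuous_on I y'"
  using assms unfolding radial_ode_def
  by (auto intro!: continuous_at_imp_continuous_on DERIV_isCont)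

lemma radial_ode_continuous_on_deriv2:
  assumes ode: "radial_ode n I y y' y''" and "0 \<notin> I"
  shows "continuous_on I y''"
proof -
  have "continuous_on I (\<lambda>r. y r / 2 - ((n - 1) / r + r / 2) * y' r)"
    using radial_ode_continuous_on[OF ode] \<open>0 \<notin> I\<close> by (auto intro!: continuous_intros)
  then show ?thesis
    by (rule continuous_on_cong[THEN iffD1, rotated 2]) (auto simp: radial_odeD(3)[OF ode])
qed

definition radial_lift :: "(real \<Rightarrow> real) \<Rightarrow> real \<Rightarrow> real"
  where "radial_lift w r = exp (- (r\<^sup>2 / 4)) * w (r\<^sup>2 / 4)"

definition radial_lift_deriv :: "(real \<Rightarrow> real) \<Rightarrow> (real \<Rightarrow> real) \<Rightarrow> real \<Rightarrow> real"
  where "radial_lift_deriv w w' r = exp (- (r\<^sup>2 / 4)) * (r / 2) * (w' (r\<^sup>2 / 4) - w (r\<^sup>2 / 4))"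

definition radial_lift_deriv2 :: "(real \<Rightarrow> real) \<Rightarrow> (real \<Rightarrow> real) \<Rightarrow> (real \<Rightarrow> real) \<Rightarrow> real \<Rightarrow> real"
  where "radial_lift_deriv2 w w' w'' r = exp (- (r\<^sup>2 / 4)) *
    ((1 / 2 - r\<^sup>2 / 4) * (w' (r\<^sup>2 / 4) - w (r\<^sup>2 / 4)) + r\<^sup>2 / 4 * (w'' (r\<^sup>2 / 4) - w' (r\<^sup>2 / 4)))"

lemma radial_ode_radial_lift:
  assumes kummer: "kummer_ode ((n + 1) / 2) (n / 2) {0<..} w w' w''"
  shows "radial_ode n {0<..} (radial_lift w) (radial_lift_deriv w w') (radial_lift_deriv2 w w' w'')"
  unfolding radial_ode_def
proof (intro ballI conjI)
  fix r :: real assume "r \<in> {0<..}"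
  then have r: "r > 0" by simp
  define s where "s = r\<^sup>2 / 4"
  have s: "s > 0" using r by (simp add: s_def)
  then have W: "(w has_real_derivative w' s) (at s)" "(w' has_real_derivative w'' s) (at s)"
      "s * w'' s + (n / 2 - s) * w' s - (n + 1) / 2 * w s = 0"
    using kummer unfolding kummer_ode_def by auto
  have ds: "((\<lambda>r. r\<^sup>2 / 4) has_real_derivative r / 2) (at r)"
    by (auto intro!: derivative_eq_intros)
  show "(radial_lift w has_real_derivative radial_lift_deriv w w' r) (at r)"
    unfolding radial_lift_def[abs_def] radial_lift_deriv_def
    using DERIV_chain2[OF W(1)[unfolded s_def] ds]
    by (auto intro!: derivative_eq_intros simp: algebra_simps)
  show "(radial_lift_deriv w w' has_real_derivative radial_lift_deriv2 w w' w'' r) (at r)"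
    unfolding radial_lift_deriv_def[abs_def] radial_lift_deriv2_def
    using DERIV_chain2[OF W(1)[unfolded s_def] ds] DERIV_chain2[OF W(2)[unfolded s_def] ds]
    by (auto intro!: derivative_eq_intros simp: field_simps power2_eq_square)
  define p where "p = (n - 1) / r + r / 2"
  have key: "p * (r / 2) = (n - 1) / 2 + s"
    using r by (simp add: p_def s_def field_simps power2_eq_square)
  have "radial_lift_deriv2 w w' w'' r + p * radial_lift_deriv w w' r - radial_lift w r / 2
      = exp (- s) * ((1 / 2 - s) * (w' s - w s) + s * (w'' s - w' s) + (p * (r / 2)) * (w' s - w s) - w s / 2)"
    unfolding radial_lift_def radial_lift_deriv_def radial_lift_deriv2_def s_def[symmetric]
    by (simp add: algebra_simps)
  also have "\<dots> = exp (- s) * (s * w'' s + (n / 2 - s) * w' s - (n + 1) / 2 * w s)"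
    unfolding key by (simp add: field_simps)
  finally show "radial_lift_deriv2 w w' w'' r + ((n - 1) / r + r / 2) * radial_lift_deriv w w' r
      - radial_lift w r / 2 = 0"
    unfolding p_def
    using W(3) by simp
qed

lemma radial_lift_sub_mult_deriv:
  "radial_lift w r - r * radial_lift_deriv w w' r
    = exp (- (r\<^sup>2 / 4)) * (w (r\<^sup>2 / 4) + 2 * (r\<^sup>2 / 4) * (w (r\<^sup>2 / 4) - w' (r\<^sup>2 / 4)))"
  by (simp add: radial_lift_def radial_lift_deriv_def algebra_simps power2_eq_square)

definition radial_weight :: "real \<Rightarrow> real \<Rightarrow> real"
  where "radial_weight n r = r powr (n - 1) * exp (r\<^sup>2 / 4)"

lemma radial_weight_pos: "r > 0 \<Longrightarrow> radial_weight n r > 0"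
  by (simp add: radial_weight_def)

lemma radial_weight_has_derivative:
  assumes "r > 0"
  shows "(radial_weight n has_real_derivative ((n - 1) / r + r / 2) * radial_weight n r) (at r)"
proof -
  have "((\<lambda>r. r powr (n - 1)) has_real_derivative (n - 1) * r powr (n - 1 - 1)) (at r)"
    using assms by (rule has_real_derivative_powr)
  from DERIV_mult[OF this DERIV_chain2[OF DERIV_exp, of "\<lambda>r. r\<^sup>2 / 4" "r / 2" r]]
  show ?thesis
    unfolding radial_weight_def[abs_def]
    by (rule DERIV_cong) (use assms in \<open>auto intro!: derivative_eq_intros simp: powr_diff field_simps power2_eq_square\<close>)
qed

lemma radial_wronskian_const:
  assumes R: "0 < R" and y: "radial_ode n {R..} y y' y''" and z: "radial_ode n {R..} z z' z''"
    and "R \<le> r"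
  shows "(y r * z' r - z r * y' r) * radial_weight n r = (y R * z' R - z R * y' R) * radial_weight n R"
proof (cases "R = r")
  case False
  with \<open>R \<le> r\<close> have "R < r" by simp
  define Z where "Z = (\<lambda>r. (y r * z' r - z r * y' r) * radial_weight n r)"
  have Z_deriv: "(Z has_real_derivative 0) (at t)" if "R \<le> t" for t
  proof -
    have t: "t \<in> {R..}" "t > 0" using that R by auto
    define p where "p = (n - 1) / t + t / 2"
    note Y = radial_odeD[OF y t(1), folded p_def] and Z = radial_odeD[OF z t(1), folded p_def]
    have "(Z has_real_derivative (y' t * z' t + y t * z'' t - (z' t * y' t + z t * y'' t)) * radial_weight n t
        + (y t * z' t - z t * y' t) * (p * radial_weight n t)) (at t)"
      unfolding Z_def p_def using Y(1,2) Z(1,2) radial_weight_has_derivative[OF t(2)]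
      by (auto intro!: derivative_eq_intros)
    then show ?thesis
      by (rule DERIV_cong) (simp add: Y(3) Z(3) algebra_simps)
  qed
  have "Z r = Z R"
    by (rule DERIV_isconst_end[OF \<open>R < r\<close>])
      (use Z_deriv in \<open>auto intro!: continuous_at_imp_continuous_on DERIV_isCont\<close>)
  then show ?thesis unfolding Z_def .
qed simp

lemma radial_ode_deriv_pos:
  assumes ode: "radial_ode n {R..} y y' y''" and y_R: "y R = 0" and y'_R: "y' R > 0" and "R \<le> r"
  shows "y' r > 0"
proof (rule ccontr)
  assume "\<not> y' r > 0"
  then have "y' r \<le> 0" by simp
  then obtain r0 where "R < r0" "y' r0 = 0" and before_r0: "\<And>t. R \<le> t \<Longrightarrow> t < r0 \<Longrightarrow> y' t > 0"
    using first_zero_after[OF radial_ode_continuous_on(2)[OF ode] y'_R \<open>R \<le> r\<close>] by blast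
  have D: "(y has_real_derivative y' t) (at t)" "(y' has_real_derivative y'' t) (at t)" if "R \<le> t" for t
    using radial_odeD[OF ode] that by auto
  have "y R < y r0"
    using \<open>R < r0\<close>
  proof (rule DERIV_pos_imp_increasing_open)
    show "continuous_on {R..r0} y"
      using radial_ode_continuous_on(1)[OF ode] by (rule continuous_on_subset) auto
    show "\<exists>d. (y has_real_derivative d) (at t) \<and> 0 < d" if "R < t" "t < r0" for t
      using D(1)[of t] before_r0[of t] that by auto
  qed
  then have "y'' r0 > 0"
    using radial_odeD(3)[OF ode] \<open>R < r0\<close> \<open>y' r0 = 0\<close> y_R by simp
  then obtain d where "d > 0" and d: "\<And>h. 0 < h \<Longrightarrow> h < d \<Longrightarrow> y' (r0 - h) < y' r0"
    using DERIV_pos_inc_left[OF D(2)[OF less_imp_le[OF \<open>R < r0\<close>]] \<open>y'' r0 > 0\<close>] by blast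
  define h where "h = min (d / 2) (r0 - R)"
  have "y' (r0 - h) < 0" using d[of h] \<open>d > 0\<close> \<open>R < r0\<close> \<open>y' r0 = 0\<close> by (simp add: h_def)
  moreover have "y' (r0 - h) > 0" using before_r0[of "r0 - h"] \<open>d > 0\<close> \<open>R < r0\<close> by (simp add: h_def)
  ultimately show False by simp
qed

lemma radial_ode_deriv_tendsto_at_right:
  assumes R: "0 < R" and ode: "radial_ode n {R<..} w w' w''" and cont: "continuous_on {R..} w"
  obtains L where "(w' \<longlongrightarrow> L) (at_right R)"
proof -
  define g where "g = (\<lambda>r. w r / 2 * radial_weight n r)"
  have weight_cont: "continuous_on {R..} (radial_weight n)"
    using R by (auto intro!: continuous_at_imp_continuous_on DERIV_isCont radial_weight_has_derivative)
  have deriv: "((\<lambda>r. w' r * radial_weight n r) has_real_derivative g r) (at r)" if "r \<in> {R<..<R + 1}" for r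
  proof -
    have r: "r \<in> {R<..}" "r > 0" using that R by auto
    from DERIV_mult[OF radial_odeD(2)[OF ode r(1)] radial_weight_has_derivative[OF r(2), of n]]
    show ?thesis
      by (rule DERIV_cong) (simp add: g_def radial_odeD(3)[OF ode r(1)] algebra_simps)
  qed
  have "continuous_on {R..R + 1} g"
    unfolding g_def
    using continuous_on_subset[OF cont] continuous_on_subset[OF weight_cont]
    by (auto intro!: continuous_intros)
  then have "bounded (g ` {R..R + 1})"
    by (intro compact_imp_bounded compact_continuous_image) auto
  then obtain B where B: "\<forall>x\<in>g ` {R..R + 1}. \<bar>x\<bar> \<le> B"
    by (auto simp: bounded_real)
  obtain L where L: "((\<lambda>r. w' r * radial_weight n r) \<longlongrightarrow> L) (at_right R)"
    by (rule tendsto_at_right_if_deriv_bounded[of R "R + 1" _ g B]) (use deriv B in force)+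
  have "((\<lambda>r. w' r * radial_weight n r / radial_weight n r) \<longlongrightarrow> L / radial_weight n R) (at_right R)"
  proof (intro tendsto_divide L)
    show "(radial_weight n \<longlongrightarrow> radial_weight n R) (at_right R)"
      using weight_cont by (auto simp: continuous_on_def intro: tendsto_within_subset)
  qed (use radial_weight_pos[OF R, of n] in simp)
  moreover have "\<forall>\<^sub>F r in at_right R. w' r * radial_weight n r / radial_weight n r = w' r"
    using eventually_at_right_less[of R]
  proof eventually_elim
    case (elim r)
    with R have "radial_weight n r > 0" by (intro radial_weight_pos) simp
    then show ?case by simp
  qed
  ultimately show ?thesis
    using that Lim_transform_eventually by blast
qed

lemma radial_ode_deriv_tendsto_right_deriv:
  assumes R: "0 < R" and ode: "radial_ode n {R<..} w w' w''" and cont: "continuous_on {R..} w"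
    and D: "(w has_real_derivative D) (at_right R)"
  shows "(w' \<longlongrightarrow> D) (at_right R)"
proof -
  obtain L where L: "(w' \<longlongrightarrow> L) (at_right R)"
    using radial_ode_deriv_tendsto_at_right[OF R ode cont] .
  have "(w \<longlongrightarrow> w R) (at R within {R..})"
    using cont by (simp add: continuous_on_def)
  then have "(w \<longlongrightarrow> w R) (at_right R)"
    by (rule tendsto_within_subset) auto
  moreover have "\<forall>\<^sub>F x in at_right R. (w has_real_derivative w' x) (at x)"
    using eventually_at_right_less[of R] by eventually_elim (auto intro: radial_odeD(1)[OF ode])
  ultimately have "(w has_real_derivative L) (at_right R)"
    by (rule has_real_derivative_at_right_if_tendsto_deriv[OF _ _ L])
  with D have "L = D"
    unfolding has_field_derivative_iff by (rule tendsto_unique[OF trivial_limit_at_right_real, rotated])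
  with L show ?thesis by simp
qed

lemma radial_energy_antimono:
  assumes n: "1 \<le> n" and R: "0 \<le> R" and ode: "radial_ode n {R<..} w w' w''" and "R < t" "t \<le> r"
  shows "(w r ^ 2 + w' r ^ 2) * exp (- 3 / 2 * r) \<le> (w t ^ 2 + w' t ^ 2) * exp (- 3 / 2 * t)"
proof (rule DERIV_nonpos_imp_nonincreasing[OF \<open>t \<le> r\<close>])
  fix u assume "t \<le> u" "u \<le> r"
  then have u: "u \<in> {R<..}" using \<open>R < t\<close> by simp
  note D = radial_odeD[OF ode u]
  define p where "p = (n - 1) / u + u / 2"
  have "p \<ge> 0" using n R u by (auto simp: p_def)
  have "2 * w u * w' u + 2 * w' u * w'' u = 3 * (w u * w' u) - 2 * (p * w' u ^ 2)"
    unfolding D(3) p_def[symmetric] by (simp add: algebra_simps power2_eq_square)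
  also have "\<dots> \<le> 3 / 2 * (w u ^ 2 + w' u ^ 2)"
  proof -
    have "2 * (w u * w' u) \<le> w u ^ 2 + w' u ^ 2"
      using zero_le_power2[of "w u - w' u"] by (simp add: power2_diff)
    moreover have "0 \<le> p * w' u ^ 2" using \<open>p \<ge> 0\<close> by simp
    ultimately show ?thesis by (simp add: algebra_simps)
  qed
  finally have "(2 * w u * w' u + 2 * w' u * w'' u) * exp (- 3 / 2 * u)
      - 3 / 2 * (w u ^ 2 + w' u ^ 2) * exp (- 3 / 2 * u) \<le> 0"
    by (simp add: mult_right_mono flip: left_diff_distrib)
  moreover have "((\<lambda>r. (w r ^ 2 + w' r ^ 2) * exp (- 3 / 2 * r)) has_real_derivative
      (2 * w u * w' u + 2 * w' u * w'' u) * exp (- 3 / 2 * u)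
      - 3 / 2 * (w u ^ 2 + w' u ^ 2) * exp (- 3 / 2 * u)) (at u)"
    using D(1,2) by (auto intro!: derivative_eq_intros simp: algebra_simps)
  ultimately show "\<exists>d. ((\<lambda>r. (w r ^ 2 + w' r ^ 2) * exp (- 3 / 2 * r)) has_real_derivative d) (at u) \<and> d \<le> 0"
    by blast
qed

lemma radial_ode_zero_initial_unique:
  assumes n: "1 \<le> n" and R: "0 < R" and ode: "radial_ode n {R<..} w w' w''"
    and cont: "continuous_on {R..} w" and w_R: "w R = 0"
    and w'_R: "(w has_real_derivative 0) (at_right R)"
    and "R \<le> r"
  shows "w r = 0"
proof -
  define Q where "Q = (\<lambda>r. (w r ^ 2 + w' r ^ 2) * exp (- 3 / 2 * r))"
  have "(w \<longlongrightarrow> w R) (at R within {R..})"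
    using cont by (simp add: continuous_on_def)
  then have "(w \<longlongrightarrow> 0) (at_right R)"
    unfolding w_R by (rule tendsto_within_subset) auto
  then have "(Q \<longlongrightarrow> (0 ^ 2 + 0 ^ 2) * exp (- 3 / 2 * R)) (at_right R)"
    unfolding Q_def using radial_ode_deriv_tendsto_right_deriv[OF R ode cont w'_R]
    by (intro tendsto_intros)
  then have Q_tendsto: "(Q \<longlongrightarrow> 0) (at_right R)" by simp
  show "w r = 0"
  proof (cases "r = R")
    case False
    with \<open>R \<le> r\<close> have "R < r" by simp
    have "Q r \<le> 0"
    proof (rule tendsto_le[OF trivial_limit_at_right_real Q_tendsto tendsto_const])
      show "\<forall>\<^sub>F t in at_right R. Q r \<le> Q t"
        using eventually_at_right_real[OF \<open>R < r\<close>]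
      proof eventually_elim
        case (elim t)
        then show ?case
          unfolding Q_def by (intro radial_energy_antimono[OF n less_imp_le[OF R] ode]) auto
      qed
    qed
    then have "w r ^ 2 + w' r ^ 2 \<le> 0"
      unfolding Q_def by (simp add: mult_le_0_iff)
    then have "w r ^ 2 = 0"
      using zero_le_power2[of "w r"] zero_le_power2[of "w' r"] by linarith
    then show ?thesis by simp
  qed (use w_R in simp)
qed

section \<open>Tricomi's function\<close>

definition tricomi_integrand :: "real \<Rightarrow> real \<Rightarrow> nat \<Rightarrow> real \<Rightarrow> real \<Rightarrow> real"
  where "tricomi_integrand p q k s t = t ^ k * exp (- s * t) * t powr (p - 1) * (1 + t) powr q"

definition tricomi_moment :: "real \<Rightarrow> real \<Rightarrow> nat \<Rightarrow> real \<Rightarrow> real"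
  where "tricomi_moment p q k s = integral {0<..} (tricomi_integrand p q k s)"

lemma continuous_on_tricomi_integrand: "continuous_on {0<..} (tricomi_integrand p q k s)"
  unfolding tricomi_integrand_def by (intro continuous_intros) auto

lemma tricomi_integrand_pos: "t > 0 \<Longrightarrow> tricomi_integrand p q k s t > 0"
  unfolding tricomi_integrand_def by simp

lemma tricomi_integrand_eq:
  "t > 0 \<Longrightarrow> tricomi_integrand p q k s t = t powr (real k + p - 1) * exp (- s * t) * (1 + t) powr q"
  unfolding tricomi_integrand_def
  by (simp add: powr_realpow[symmetric] powr_add[symmetric] add_diff_eq mult_ac)

lemma tricomi_integrand_le:
  assumes "t > 0" "q \<le> 0"
  shows "tricomi_integrand p q k s t \<le> t powr (real k + p - 1) * exp (- s * t)"
  unfolding tricomi_integrand_eq[OF \<open>t > 0\<close>]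
  using one_add_powr_le_1[of t q] assms by (intro mult_left_le) auto

lemma tricomi_integrand_ge:
  assumes "t > 0" "-2 \<le> q"
  shows "t powr (real k + p - 1) * exp (- s * t) - 2 * (t powr (real (Suc k) + p - 1) * exp (- s * t))
    \<le> tricomi_integrand p q k s t"
proof -
  have "t powr (real (Suc k) + p - 1) = t powr (1 + (real k + p - 1))"
    by (simp add: algebra_simps)
  also have "\<dots> = t * t powr (real k + p - 1)"
    using assms by (simp only: powr_add powr_one)
  finally have "t powr (real (Suc k) + p - 1) = t * t powr (real k + p - 1)" .
  then have "t powr (real k + p - 1) * exp (- s * t) - 2 * (t powr (real (Suc k) + p - 1) * exp (- s * t))
      = t powr (real k + p - 1) * exp (- s * t) * (1 - 2 * t)"
    by (simp add: algebra_simps)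
  also have "\<dots> \<le> tricomi_integrand p q k s t"
    unfolding tricomi_integrand_eq[OF \<open>t > 0\<close>]
    using one_sub_two_mult_le_one_add_powr[of t q] assms by (intro mult_left_mono) auto
  finally show ?thesis .
qed

lemma tricomi_integrand_integrable:
  assumes "p > 0" "q \<le> 0" "s > 0"
  shows "tricomi_integrand p q k s integrable_on {0<..}"
proof (rule integrable_on_Ioi_if_dominated[OF continuous_on_tricomi_integrand])
  show "(\<lambda>t. t powr (real k + p - 1) * exp (- s * t)) integrable_on {0<..}"
    using has_integral_powr_exp_Gamma[of "real k + p" s] assms by (auto simp: has_integral_integrable)
  show "\<bar>tricomi_integrand p q k s t\<bar> \<le> t powr (real k + p - 1) * exp (- s * t)" if "t > 0" for t
    using tricomi_integrand_le[OF that \<open>q \<le> 0\<close>, of p k s] tricomi_integrand_pos[OF that, of p q k s]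
    by simp
qed

lemma tricomi_moment_has_integral:
  "p > 0 \<Longrightarrow> q \<le> 0 \<Longrightarrow> s > 0 \<Longrightarrow> (tricomi_integrand p q k s has_integral tricomi_moment p q k s) {0<..}"
  unfolding tricomi_moment_def by (rule integrable_integral[OF tricomi_integrand_integrable])

lemma tricomi_moment_pos:
  assumes "p > 0" "q \<le> 0" "s > 0"
  shows "tricomi_moment p q k s > 0"
  unfolding tricomi_moment_def
  by (rule integral_Ioi_pos[OF continuous_on_tricomi_integrand tricomi_integrand_integrable[OF assms]
        tricomi_integrand_pos])

lemma tricomi_moment_le:
  assumes "p > 0" "q \<le> 0" "s > 0"
  shows "tricomi_moment p q k s \<le> Gamma (real k + p) / s powr (real k + p)"
proof (rule has_integral_le[OF tricomi_moment_has_integral[OF assms] has_integral_powr_exp_Gamma])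
  fix t :: real assume "t \<in> {0<..}"
  then show "tricomi_integrand p q k s t \<le> t powr (real k + p - 1) * exp (- s * t)"
    using tricomi_integrand_le assms by simp
qed (use assms in auto)

lemma tricomi_moment_ge:
  assumes "p > 0" "-2 \<le> q" "q \<le> 0" "s > 0"
  shows "Gamma (real k + p) / s powr (real k + p) - 2 * (Gamma (real (Suc k) + p) / s powr (real (Suc k) + p))
    \<le> tricomi_moment p q k s"
proof (rule has_integral_le[OF _ tricomi_moment_has_integral])
  show "((\<lambda>t. t powr (real k + p - 1) * exp (- s * t) - 2 * (t powr (real (Suc k) + p - 1) * exp (- s * t)))
      has_integral Gamma (real k + p) / s powr (real k + p)
        - 2 * (Gamma (real (Suc k) + p) / s powr (real (Suc k) + p))) {0<..}"
    using assms by (intro has_integral_diff has_integral_mult_right has_integral_powr_exp_Gamma) auto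
qed (use assms tricomi_integrand_ge in auto)

lemma tricomi_integrand_remainder_le:
  assumes "t > 0" and "\<bar>x - s\<bar> \<le> s / 2"
  shows "\<bar>tricomi_integrand p q k x t - tricomi_integrand p q k s t + (x - s) * tricomi_integrand p q (Suc k) s t\<bar>
    \<le> (x - s)\<^sup>2 * tricomi_integrand p q (Suc (Suc k)) (s / 2) t"
proof -
  define h where "h = t ^ k * t powr (p - 1) * (1 + t) powr q"
  have "h > 0" using assms by (simp add: h_def)
  have "tricomi_integrand p q k x t - tricomi_integrand p q k s t + (x - s) * tricomi_integrand p q (Suc k) s t
      = h * (exp (- x * t) - exp (- s * t) + (x - s) * (t * exp (- s * t)))"
    by (simp add: tricomi_integrand_def h_def algebra_simps)
  then have "\<bar>tricomi_integrand p q k x t - tricomi_integrand p q k s t + (x - s) * tricomi_integrand p q (Suc k) s t\<bar>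
      = h * \<bar>exp (- x * t) - exp (- s * t) + (x - s) * (t * exp (- s * t))\<bar>"
    using \<open>h > 0\<close> by (simp add: abs_mult)
  also have "\<dots> \<le> h * ((x - s)\<^sup>2 * t\<^sup>2 * exp (- (s / 2) * t))"
    using \<open>h > 0\<close> by (intro mult_left_mono exp_linear_remainder_le assms) auto
  also have "\<dots> = (x - s)\<^sup>2 * tricomi_integrand p q (Suc (Suc k)) (s / 2) t"
    by (simp add: tricomi_integrand_def h_def power2_eq_square algebra_simps)
  finally show ?thesis .
qed

lemma tricomi_moment_remainder_le:
  assumes "p > 0" "q \<le> 0" "s > 0" and xs: "\<bar>x - s\<bar> \<le> s / 2"
  shows "\<bar>tricomi_moment p q k x - tricomi_moment p q k s + (x - s) * tricomi_moment p q (Suc k) s\<bar>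
    \<le> (x - s)\<^sup>2 * tricomi_moment p q (Suc (Suc k)) (s / 2)"
proof -
  have "x > 0" using xs \<open>s > 0\<close> by (auto simp: abs_if split: if_splits)
  have I: "((\<lambda>t. tricomi_integrand p q k x t - tricomi_integrand p q k s t + (x - s) * tricomi_integrand p q (Suc k) s t)
      has_integral tricomi_moment p q k x - tricomi_moment p q k s + (x - s) * tricomi_moment p q (Suc k) s) {0<..}"
    using assms \<open>x > 0\<close> by (intro has_integral_add has_integral_diff has_integral_mult_right tricomi_moment_has_integral)
  have J: "((\<lambda>t. (x - s)\<^sup>2 * tricomi_integrand p q (Suc (Suc k)) (s / 2) t)
      has_integral (x - s)\<^sup>2 * tricomi_moment p q (Suc (Suc k)) (s / 2)) {0<..}"
    using assms by (intro has_integral_mult_right tricomi_moment_has_integral) auto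
  have "norm (integral {0<..} (\<lambda>t. tricomi_integrand p q k x t - tricomi_integrand p q k s t
        + (x - s) * tricomi_integrand p q (Suc k) s t))
      \<le> integral {0<..} (\<lambda>t. (x - s)\<^sup>2 * tricomi_integrand p q (Suc (Suc k)) (s / 2) t)"
    by (rule integral_norm_bound_integral[OF has_integral_integrable[OF I] has_integral_integrable[OF J]])
      (use tricomi_integrand_remainder_le[OF _ xs] in simp)
  then show ?thesis
    by (simp only: integral_unique[OF I] integral_unique[OF J] real_norm_def)
qed

lemma tricomi_moment_has_derivative:
  assumes p: "p > 0" and q: "q \<le> 0" and s: "s > 0"
  shows "(tricomi_moment p q k has_real_derivative - tricomi_moment p q (Suc k) s) (at s)"
proof -
  define C where "C = tricomi_moment p q (Suc (Suc k)) (s / 2)"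
  have "\<forall>\<^sub>F x in at s. norm ((tricomi_moment p q k x - tricomi_moment p q k s) / (x - s)
      - - tricomi_moment p q (Suc k) s) \<le> \<bar>x - s\<bar> * C"
  proof -
    have "\<forall>\<^sub>F x in at s. x \<noteq> s \<and> dist x s < s / 2"
      using s unfolding eventually_at by (intro exI[of _ "s / 2"]) auto
    then show ?thesis
    proof eventually_elim
      case (elim x)
      then have "\<bar>x - s\<bar> \<le> s / 2" "x \<noteq> s" by (auto simp: dist_real_def)
      have "(tricomi_moment p q k x - tricomi_moment p q k s) / (x - s) - - tricomi_moment p q (Suc k) s
          = (tricomi_moment p q k x - tricomi_moment p q k s + (x - s) * tricomi_moment p q (Suc k) s) / (x - s)"
        using \<open>x \<noteq> s\<close> by (simp add: field_simps)
      with tricomi_moment_remainder_le[OF p q s \<open>\<bar>x - s\<bar> \<le> s / 2\<close>, of k] \<open>x \<noteq> s\<close> show ?case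
        by (simp add: C_def abs_divide pos_divide_le_eq power2_eq_square mult_ac)
    qed
  qed
  moreover have "((\<lambda>x. \<bar>x - s\<bar> * C) \<longlongrightarrow> 0) (at s)"
    by (rule tendsto_eq_intros refl | simp)+
  ultimately show ?thesis
    unfolding has_field_derivative_iff by (subst Lim_null) (rule Lim_null_comparison)
qed

lemma tricomi_moment_asymp:
  assumes p: "p > 0" and q: "-2 \<le> q" "q \<le> 0"
  shows "((\<lambda>s. s powr (real k + p) * tricomi_moment p q k s) \<longlongrightarrow> Gamma (real k + p)) at_top"
proof (rule tendsto_sandwich)
  define G where "G = 2 * Gamma (real (Suc k) + p)"
  show "\<forall>\<^sub>F s in at_top. Gamma (real k + p) - G / s \<le> s powr (real k + p) * tricomi_moment p q k s"
    using eventually_gt_at_top[of 0]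
  proof eventually_elim
    case (elim s)
    have "s powr (real (Suc k) + p) = s * s powr (real k + p)"
      using elim by (simp add: powr_add add_ac)
    then have "Gamma (real k + p) - G / s
        = s powr (real k + p) * (Gamma (real k + p) / s powr (real k + p)
          - 2 * (Gamma (real (Suc k) + p) / s powr (real (Suc k) + p)))"
      using elim by (simp add: G_def field_simps)
    also have "\<dots> \<le> s powr (real k + p) * tricomi_moment p q k s"
      by (intro mult_left_mono tricomi_moment_ge p q elim) auto
    finally show ?case .
  qed
  show "\<forall>\<^sub>F s in at_top. s powr (real k + p) * tricomi_moment p q k s \<le> Gamma (real k + p)"
    using eventually_gt_at_top[of 0]
  proof eventually_elim
    case (elim s)
    have "s powr (real k + p) * tricomi_moment p q k s
        \<le> s powr (real k + p) * (Gamma (real k + p) / s powr (real k + p))"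
      by (intro mult_left_mono tricomi_moment_le p q elim) auto
    then show ?case using elim by simp
  qed
  show "((\<lambda>s. Gamma (real k + p) - G / s) \<longlongrightarrow> Gamma (real k + p)) at_top"
    by real_asymp
qed simp

text \<open>Kummer's equation for U in integrated form: the integrand below is the derivative of
  exp(-s t) t^p (1+t)^(q+1), which vanishes at both ends of (0, infinity).\<close>

lemma tricomi_moment_recurrence:
  assumes p: "p > 0" and q: "q \<le> 0" and s: "s > 0"
  shows "p * tricomi_moment p q 0 s + (p + q + 1 - s) * tricomi_moment p q 1 s - s * tricomi_moment p q 2 s = 0"
proof -
  define G where "G = (\<lambda>t::real. exp (- s * t) * t powr p * (1 + t) powr (q + 1))"
  define g where "g = (\<lambda>t. p * tricomi_integrand p q 0 s t + (p + q + 1 - s) * tricomi_integrand p q 1 s t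
    - s * tricomi_integrand p q 2 s t)"
  have G_deriv: "(G has_real_derivative g t) (at t)" if t: "t > 0" for t
  proof -
    have "t powr p = t * t powr (p - 1)" "(1 + t) powr (q + 1) = (1 + t) * (1 + t) powr q"
      using t by (simp_all add: powr_diff powr_add)
    moreover have "(G has_real_derivative
        ((- s * exp (- s * t)) * t powr p + (p * t powr (p - 1)) * exp (- s * t)) * (1 + t) powr (q + 1)
        + ((q + 1) * (1 + t) powr q) * (exp (- s * t) * t powr p)) (at t)"
      unfolding G_def using t by (intro DERIV_mult) (auto intro!: derivative_eq_intros has_real_derivative_powr)
    ultimately show ?thesis
      by (elim DERIV_cong_ev[THEN iffD1, rotated 3])
        (simp_all add: g_def tricomi_integrand_def algebra_simps power2_eq_square)
  qed
  have "integral {0<..} g = 0"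
  proof (rule integral_Ioi_derivative_eq_zero[OF G_deriv])
    show "continuous_on {0<..} g"
      unfolding g_def using continuous_on_tricomi_integrand by (intro continuous_intros) auto
    show "g absolutely_integrable_on {0<..}"
      unfolding g_def using tricomi_integrand_integrable[OF p q s] tricomi_integrand_pos
      by (intro set_integral_add set_integral_diff set_integrable_mult_right
          nonnegative_absolutely_integrable_1) (auto intro: less_imp_le)
    show "(G \<longlongrightarrow> 0) (at_right 0)"
      unfolding G_def using p by real_asymp
    show "(G \<longlongrightarrow> 0) at_top"
      unfolding G_def using s by real_asymp
  qed
  moreover have "(g has_integral p * tricomi_moment p q 0 s + (p + q + 1 - s) * tricomi_moment p q 1 s
      - s * tricomi_moment p q 2 s) {0<..}"
    unfolding g_def using p q s
    by (intro has_integral_add has_integral_diff has_integral_mult_right tricomi_moment_has_integral)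
  ultimately show ?thesis
    by (simp add: integral_unique)
qed

definition tricomiU_deriv :: "real \<Rightarrow> real \<Rightarrow> nat \<Rightarrow> real \<Rightarrow> real"
  where "tricomiU_deriv a b j s = (- 1) ^ j * tricomi_moment a (b - a - 1) j s / Gamma a"

lemma tricomiU_eq_tricomiU_deriv: "tricomiU a b = tricomiU_deriv a b 0"
proof
  fix s
  have "integral {0..} (\<lambda>t. exp (- s * t) * t powr (a - 1) * (1 + t) powr (b - a - 1))
      = integral {0<..} (\<lambda>t. exp (- s * t) * t powr (a - 1) * (1 + t) powr (b - a - 1))"
    by (rule integral_spike_set) (auto intro: negligible_subset[OF negligible_sing[of 0]])
  then show "tricomiU a b s = tricomiU_deriv a b 0 s"
    by (simp add: tricomiU_def tricomiU_deriv_def tricomi_moment_def tricomi_integrand_def[abs_def] mult_ac)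
qed

context
  fixes a b :: real
  assumes a_pos: "0 < a" and b_le: "b \<le> a + 1"
begin

lemma tricomiU_deriv_has_derivative:
  assumes "s > 0"
  shows "(tricomiU_deriv a b j has_real_derivative tricomiU_deriv a b (Suc j) s) (at s)"
proof -
  have "Gamma a \<noteq> 0" using Gamma_real_pos[OF a_pos] by linarith
  then show ?thesis
    unfolding tricomiU_deriv_def[abs_def]
    using a_pos b_le assms by (auto intro!: derivative_eq_intros tricomi_moment_has_derivative)
qed

lemma kummer_ode_tricomiU:
  "kummer_ode a b {0<..} (tricomiU_deriv a b 0) (tricomiU_deriv a b 1) (tricomiU_deriv a b 2)"
  unfolding kummer_ode_def
proof (intro ballI conjI)
  fix s :: real assume "s \<in> {0<..}"
  then have s: "s > 0" by simp
  show "(tricomiU_deriv a b 0 has_real_derivative tricomiU_deriv a b 1 s) (at s)"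
    "(tricomiU_deriv a b 1 has_real_derivative tricomiU_deriv a b 2 s) (at s)"
    using tricomiU_deriv_has_derivative[OF s, of 0] tricomiU_deriv_has_derivative[OF s, of 1]
    by (simp_all add: numeral_2_eq_2)
  have "s * tricomiU_deriv a b 2 s + (b - s) * tricomiU_deriv a b 1 s - a * tricomiU_deriv a b 0 s
      = - (a * tricomi_moment a (b - a - 1) 0 s + (a + (b - a - 1) + 1 - s) * tricomi_moment a (b - a - 1) 1 s
          - s * tricomi_moment a (b - a - 1) 2 s) / Gamma a"
    unfolding tricomiU_deriv_def using Gamma_real_pos[OF a_pos] by (simp add: field_simps)
  also have "\<dots> = 0"
    using tricomi_moment_recurrence[OF a_pos _ s, of "b - a - 1"] b_le by simp
  finally show "s * tricomiU_deriv a b 2 s + (b - s) * tricomiU_deriv a b 1 s - a * tricomiU_deriv a b 0 s = 0" .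
qed

lemma tricomiU_deriv_0_pos: "s > 0 \<Longrightarrow> tricomiU_deriv a b 0 s > 0"
  unfolding tricomiU_deriv_def using tricomi_moment_pos[of a "b - a - 1" s 0] a_pos b_le Gamma_real_pos[OF a_pos]
  by simp

lemma tricomiU_deriv_1_neg: "s > 0 \<Longrightarrow> tricomiU_deriv a b 1 s < 0"
  unfolding tricomiU_deriv_def using a_pos b_le Gamma_real_pos[OF a_pos] by (simp add: tricomi_moment_pos)

lemma tricomiU_deriv_0_asymp:
  "a - 1 \<le> b \<Longrightarrow> ((\<lambda>s. s powr a * tricomiU_deriv a b 0 s) \<longlongrightarrow> 1) at_top"
  using tendsto_divide[OF tricomi_moment_asymp[OF a_pos, of "b - a - 1" 0] tendsto_const, of "Gamma a"]
    Gamma_real_pos[OF a_pos] b_le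
  by (simp add: tricomiU_deriv_def)

lemma tricomiU_deriv_1_asymp:
  assumes "a - 1 \<le> b"
  shows "((\<lambda>s. s powr (a + 1) * tricomiU_deriv a b 1 s) \<longlongrightarrow> - a) at_top"
proof -
  have "a \<notin> \<int>\<^sub>\<le>\<^sub>0" using a_pos by (auto dest: nonpos_Ints_nonpos)
  then have "Gamma (real 1 + a) = a * Gamma a"
    using Gamma_plus1[of a] by (simp add: add.commute)
  then show ?thesis
    using tendsto_divide[OF tendsto_minus[OF tricomi_moment_asymp[OF a_pos, of "b - a - 1" 1]] tendsto_const,
        of "Gamma a"] Gamma_real_pos[OF a_pos] assms b_le
    by (simp add: tricomiU_deriv_def add.commute)
qed

lemma tricomiU_deriv_combination_pos:
  assumes "s > 0"
  shows "0 < tricomiU_deriv a b 0 s + 2 * s * (tricomiU_deriv a b 0 s - tricomiU_deriv a b 1 s)"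
proof -
  have "0 < 2 * s * (tricomiU_deriv a b 0 s - tricomiU_deriv a b 1 s)"
    using assms tricomiU_deriv_0_pos[OF assms] tricomiU_deriv_1_neg[OF assms] by (intro mult_pos_pos) auto
  with tricomiU_deriv_0_pos[OF assms] show ?thesis by linarith
qed

lemma tricomiU_deriv_combination_asymp:
  assumes "a - 1 \<le> b"
  shows "((\<lambda>s. s powr (a - 1) * (tricomiU_deriv a b 0 s + 2 * s * (tricomiU_deriv a b 0 s - tricomiU_deriv a b 1 s)))
    \<longlongrightarrow> 2) at_top"
proof -
  note U0 = tricomiU_deriv_0_asymp[OF assms] and U1 = tricomiU_deriv_1_asymp[OF assms]
  have inf: "filterlim (\<lambda>s::real. s) at_infinity at_top"
    by (rule filterlim_at_top_imp_at_infinity[OF filterlim_ident])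
  have "((\<lambda>s. s powr a * tricomiU_deriv a b 0 s / s + 2 * (s powr a * tricomiU_deriv a b 0 s)
      - 2 * (s powr (a + 1) * tricomiU_deriv a b 1 s / s)) \<longlongrightarrow> 0 + 2 * 1 - 2 * 0) at_top"
    by (intro tendsto_intros tendsto_divide_0[OF U0 inf] tendsto_divide_0[OF U1 inf] U0)
  then have "((\<lambda>s. s powr a * tricomiU_deriv a b 0 s / s + 2 * (s powr a * tricomiU_deriv a b 0 s)
      - 2 * (s powr (a + 1) * tricomiU_deriv a b 1 s / s)) \<longlongrightarrow> 2) at_top"
    by (simp only: add_0_left mult_1_right mult_zero_right diff_zero)
  moreover have "\<forall>\<^sub>F s in at_top. s powr a * tricomiU_deriv a b 0 s / s + 2 * (s powr a * tricomiU_deriv a b 0 s)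
      - 2 * (s powr (a + 1) * tricomiU_deriv a b 1 s / s)
    = s powr (a - 1) * (tricomiU_deriv a b 0 s + 2 * s * (tricomiU_deriv a b 0 s - tricomiU_deriv a b 1 s))"
    using eventually_gt_at_top[of 0]
  proof eventually_elim
    case (elim s)
    have "s powr a = s powr (a - 1) * s" "s powr (a + 1) = s powr (a - 1) * s * s"
      using elim by (simp_all add: powr_add powr_diff)
    then show ?case using elim by (simp add: algebra_simps)
  qed
  ultimately show ?thesis by (rule Lim_transform_eventually)
qed

end

section \<open>Kummer's function\<close>

definition kummer_coeff :: "real \<Rightarrow> real \<Rightarrow> nat \<Rightarrow> real"
  where "kummer_coeff a b k = pochhammer a k / pochhammer b k / fact k"

definition kummerM_deriv :: "real \<Rightarrow> real \<Rightarrow> nat \<Rightarrow> real \<Rightarrow> real"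
  where "kummerM_deriv a b j s = (\<Sum>k. (diffs ^^ j) (kummer_coeff a b) k * s ^ k)"

lemma kummerM_eq_kummerM_deriv: "kummerM a b = kummerM_deriv a b 0"
  by (simp add: fun_eq_iff kummerM_def kummerM_deriv_def kummer_coeff_def field_simps)

lemma kummer_coeff_pos: "0 < a \<Longrightarrow> 0 < b \<Longrightarrow> kummer_coeff a b k > 0"
  unfolding kummer_coeff_def by (simp add: pochhammer_pos)

lemma diffs_kummer_coeff_eq:
  "diffs (kummer_coeff a b) k = pochhammer a (Suc k) / pochhammer b (Suc k) / fact k"
  by (simp add: diffs_def kummer_coeff_def fact_Suc)

lemma diffs_kummer_coeff:
  assumes "b > 0"
  shows "diffs (kummer_coeff a b) = (\<lambda>k. a / b * kummer_coeff (a + 1) (b + 1) k)"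
  by (simp add: fun_eq_iff diffs_kummer_coeff_eq kummer_coeff_def pochhammer_rec)

lemma kummer_coeff_recurrence:
  assumes "b > 0"
  shows "(b + k) * diffs (kummer_coeff a b) k = (a + k) * kummer_coeff a b k"
proof -
  have "b + k \<noteq> 0" using assms by (metis add_pos_nonneg of_nat_0_le_iff less_irrefl)
  then show ?thesis by (simp add: diffs_kummer_coeff_eq kummer_coeff_def pochhammer_Suc)
qed

lemma funpow_diffs_kummer_coeff:
  assumes "b > 0"
  shows "(diffs ^^ j) (kummer_coeff a b)
    = (\<lambda>k. pochhammer a j / pochhammer b j * kummer_coeff (a + j) (b + j) k)"
proof (induction j)
  case (Suc j)
  have "b + j > 0" using assms by simp
  have "pochhammer b j > 0" using assms by (simp add: pochhammer_pos)
  have "(diffs ^^ Suc j) (kummer_coeff a b) = diffs (\<lambda>k. pochhammer a j / pochhammer b j * kummer_coeff (a + j) (b + j) k)"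
    using Suc.IH by simp
  also have "\<dots> = (\<lambda>k. pochhammer a j / pochhammer b j * diffs (kummer_coeff (a + j) (b + j)) k)"
    by (simp add: diffs_def fun_eq_iff)
  also have "\<dots> = (\<lambda>k. pochhammer a (Suc j) / pochhammer b (Suc j) * kummer_coeff (a + Suc j) (b + Suc j) k)"
    using \<open>b + j > 0\<close> \<open>pochhammer b j > 0\<close>
    by (simp add: diffs_kummer_coeff pochhammer_Suc field_simps add_ac)
  finally show ?case .
qed simp

lemma kummer_coeff_le:
  assumes "0 < b" "b \<le> a"
  shows "kummer_coeff a b k \<le> (a / b) ^ k / fact k"
proof (induction k)
  case (Suc k)
  have "b + k > 0" using assms by simp
  have "diffs (kummer_coeff a b) k = kummer_coeff a b k * ((a + k) / (b + k))"
    using kummer_coeff_recurrence[OF assms(1), of k a] \<open>b + k > 0\<close> by (simp add: eq_divide_eq mult.commute)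
  then have "kummer_coeff a b (Suc k) = kummer_coeff a b k * ((a + k) / (b + k)) / (k + 1)"
    using \<open>b + k > 0\<close> by (simp add: diffs_def eq_divide_eq mult_ac)
  also have "\<dots> \<le> (a / b) ^ k / fact k * (a / b) / (k + 1)"
  proof (intro divide_right_mono mult_mono Suc.IH)
    show "(a + k) / (b + k) \<le> a / b"
      using assms by (simp add: frac_le field_simps mult_right_mono)
  qed (use assms in \<open>auto simp: kummer_coeff_def pochhammer_pos\<close>)
  also have "\<dots> = (a / b) ^ Suc k / fact (Suc k)"
    by (simp add: field_simps)
  finally show ?case .
qed (simp add: kummer_coeff_def)

lemma summable_kummer_series:
  assumes "0 < b" "b \<le> a"
  shows "summable (\<lambda>k. kummer_coeff a b k * s ^ k)"
proof (rule summable_comparison_test[OF _ summable_exp_generic[of "a / b * \<bar>s\<bar>"]])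
  have "norm (kummer_coeff a b k * s ^ k) \<le> (a / b * \<bar>s\<bar>) ^ k /\<^sub>R fact k" for k
  proof -
    have "norm (kummer_coeff a b k * s ^ k) = kummer_coeff a b k * \<bar>s\<bar> ^ k"
      using kummer_coeff_pos[of a b k] assms by (simp add: abs_mult power_abs)
    also have "\<dots> \<le> (a / b) ^ k / fact k * \<bar>s\<bar> ^ k"
      by (intro mult_right_mono kummer_coeff_le assms) auto
    finally show ?thesis by (simp add: power_mult_distrib divide_inverse mult_ac)
  qed
  then show "\<exists>N. \<forall>k\<ge>N. norm (kummer_coeff a b k * s ^ k) \<le> (a / b * \<bar>s\<bar>) ^ k /\<^sub>R fact k"
    by blast
qed

lemma sums_real_mult_coeff_if_diffs_sums:
  fixes c :: "nat \<Rightarrow> real"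
  assumes "(\<lambda>k. diffs c k * s ^ k) sums S"
  shows "(\<lambda>k. real k * c k * s ^ k) sums (s * S)"
proof -
  have "(\<lambda>k. s * (diffs c k * s ^ k)) sums (s * S)"
    by (rule sums_mult[OF assms])
  then have "(\<lambda>k. (\<lambda>m. real m * c m * s ^ m) (Suc k)) sums (s * S)"
    by (simp add: diffs_def algebra_simps)
  then show ?thesis by (subst (asm) sums_Suc_iff) simp
qed

context
  fixes a b :: real
  assumes b_pos: "0 < b" and b_le: "b \<le> a"
begin

lemma summable_kummerM_deriv: "summable (\<lambda>k. (diffs ^^ j) (kummer_coeff a b) k * s ^ k)"
  using summable_mult[OF summable_kummer_series[of "b + j" "a + j" s], of "pochhammer a j / pochhammer b j"]
    b_pos b_le
  by (simp add: funpow_diffs_kummer_coeff mult_ac)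

lemma kummerM_deriv_has_derivative:
  "(kummerM_deriv a b j has_real_derivative kummerM_deriv a b (Suc j) s) (at s)"
  unfolding kummerM_deriv_def[abs_def]
  using termdiffs_strong_converges_everywhere[OF summable_kummerM_deriv] by simp

lemma kummerM_deriv_pos: "s > 0 \<Longrightarrow> kummerM_deriv a b j s > 0"
  unfolding kummerM_deriv_def funpow_diffs_kummer_coeff[OF b_pos]
  using b_pos b_le summable_kummerM_deriv[of j s]
  by (intro suminf_pos) (auto simp: funpow_diffs_kummer_coeff[OF b_pos] pochhammer_pos kummer_coeff_pos)

lemma kummer_ode_kummerM:
  "kummer_ode a b UNIV (kummerM_deriv a b 0) (kummerM_deriv a b 1) (kummerM_deriv a b 2)"
  unfolding kummer_ode_def
proof (intro ballI conjI)
  fix s :: real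
  show "(kummerM_deriv a b 0 has_real_derivative kummerM_deriv a b 1 s) (at s)"
    "(kummerM_deriv a b 1 has_real_derivative kummerM_deriv a b 2 s) (at s)"
    using kummerM_deriv_has_derivative[of 0 s] kummerM_deriv_has_derivative[of 1 s]
    by (simp_all add: numeral_2_eq_2)
  define c where "c = kummer_coeff a b"
  have sums: "(\<lambda>k. (diffs ^^ j) c k * s ^ k) sums kummerM_deriv a b j s" for j
    unfolding c_def kummerM_deriv_def using summable_kummerM_deriv by (simp add: summable_sums)
  have shifted: "(\<lambda>k. real k * (diffs ^^ j) c k * s ^ k) sums (s * kummerM_deriv a b (Suc j) s)" for j
    using sums[of "Suc j"] by (intro sums_real_mult_coeff_if_diffs_sums) simp
  have "(\<lambda>k. real k * diffs c k * s ^ k + b * (diffs c k * s ^ k) - real k * c k * s ^ k - a * (c k * s ^ k))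
      sums (s * kummerM_deriv a b 2 s + b * kummerM_deriv a b 1 s - s * kummerM_deriv a b 1 s - a * kummerM_deriv a b 0 s)"
    using shifted[of 1] shifted[of 0] sums[of 1] sums[of 0]
    by (intro sums_add sums_diff sums_mult) (simp_all add: numeral_2_eq_2)
  moreover have "real k * diffs c k * s ^ k + b * (diffs c k * s ^ k) - real k * c k * s ^ k - a * (c k * s ^ k) = 0" for k
  proof -
    have "real k * diffs c k * s ^ k + b * (diffs c k * s ^ k) - real k * c k * s ^ k - a * (c k * s ^ k)
        = ((b + k) * diffs c k - (a + k) * c k) * s ^ k"
      by (simp add: algebra_simps)
    then show ?thesis
      using kummer_coeff_recurrence[OF b_pos, of k a] by (simp add: c_def)
  qed
  ultimately have "(\<lambda>k. 0) sums (s * kummerM_deriv a b 2 s + b * kummerM_deriv a b 1 s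
      - s * kummerM_deriv a b 1 s - a * kummerM_deriv a b 0 s)"
    by simp
  from sums_unique2[OF this sums_zero]
  show "s * kummerM_deriv a b 2 s + (b - s) * kummerM_deriv a b 1 s - a * kummerM_deriv a b 0 s = 0"
    by (simp add: algebra_simps)
qed

end

section \<open>The boundary value problem\<close>

definition vanishing_kummer :: "nat \<Rightarrow> real \<Rightarrow> nat \<Rightarrow> real \<Rightarrow> real"
  where "vanishing_kummer n R j s =
    kummerM ((real n + 1) / 2) (real n / 2) (R\<^sup>2 / 4) * tricomiU_deriv ((real n + 1) / 2) (real n / 2) j s
    - tricomiU ((real n + 1) / 2) (real n / 2) (R\<^sup>2 / 4) * kummerM_deriv ((real n + 1) / 2) (real n / 2) j s"

lemma kummer_ode_vanishing_kummer:
  assumes "1 \<le> n"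
  shows "kummer_ode ((real n + 1) / 2) (real n / 2) {0<..}
    (vanishing_kummer n R 0) (vanishing_kummer n R 1) (vanishing_kummer n R 2)"
  unfolding vanishing_kummer_def[abs_def]
  using assms
  by (intro kummer_ode_lincomb kummer_ode_tricomiU kummer_ode_subset[OF kummer_ode_kummerM])
    (auto simp: field_simps)

lemma vanishing_kummer_at_R: "vanishing_kummer n R 0 (R\<^sup>2 / 4) = 0"
  by (simp add: vanishing_kummer_def tricomiU_eq_tricomiU_deriv kummerM_eq_kummerM_deriv)

lemma wronskW_eq:
  assumes "1 \<le> n" "s > 0"
  shows "wronskW n s =
    kummerM_deriv ((real n + 1) / 2) (real n / 2) 0 s * tricomiU_deriv ((real n + 1) / 2) (real n / 2) 1 s
    - tricomiU_deriv ((real n + 1) / 2) (real n / 2) 0 s * kummerM_deriv ((real n + 1) / 2) (real n / 2) 1 s"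
proof -
  let ?a = "(real n + 1) / 2" and ?b = "real n / 2"
  have "(tricomiU_deriv ?a ?b 0 has_real_derivative tricomiU_deriv ?a ?b (Suc 0) s) (at s)"
    by (rule tricomiU_deriv_has_derivative) (use assms in \<open>auto simp: field_simps\<close>)
  moreover have "(kummerM_deriv ?a ?b 0 has_real_derivative kummerM_deriv ?a ?b (Suc 0) s) (at s)"
    by (rule kummerM_deriv_has_derivative) (use assms in auto)
  ultimately have "deriv (tricomiU_deriv ?a ?b 0) s = tricomiU_deriv ?a ?b 1 s"
    "deriv (kummerM_deriv ?a ?b 0) s = kummerM_deriv ?a ?b 1 s"
    by (simp_all add: DERIV_imp_deriv)
  then show ?thesis
    by (simp add: wronskW_def tricomiU_eq_tricomiU_deriv kummerM_eq_kummerM_deriv)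
qed

lemma wronskW_neg:
  assumes "1 \<le> n" "s > 0"
  shows "wronskW n s < 0"
proof -
  let ?a = "(real n + 1) / 2" and ?b = "real n / 2"
  have "kummerM_deriv ?a ?b 0 s * tricomiU_deriv ?a ?b 1 s < 0"
    using assms by (intro mult_pos_neg kummerM_deriv_pos tricomiU_deriv_1_neg) (auto simp: field_simps)
  moreover have "tricomiU_deriv ?a ?b 0 s * kummerM_deriv ?a ?b 1 s > 0"
    using assms by (intro mult_pos_pos kummerM_deriv_pos tricomiU_deriv_0_pos) (auto simp: field_simps)
  ultimately show ?thesis
    using wronskW_eq[OF assms] by simp
qed

lemma vanishing_kummer_deriv_at_R:
  assumes "1 \<le> n" "R \<noteq> 0"
  shows "vanishing_kummer n R 1 (R\<^sup>2 / 4) = wronskW n (R\<^sup>2 / 4)"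
  using assms by (simp add: vanishing_kummer_def wronskW_eq tricomiU_eq_tricomiU_deriv kummerM_eq_kummerM_deriv)

lemma explicitU_eq_radial_lift:
  "explicitU n R = (\<lambda>r. 2 * sqrt 2 * exp (R\<^sup>2 / 4) / (R * wronskW n (R\<^sup>2 / 4))
    * radial_lift (vanishing_kummer n R 0) r)"
proof
  fix r
  have "exp ((R\<^sup>2 - r\<^sup>2) / 4) = exp (R\<^sup>2 / 4) * exp (- (r\<^sup>2 / 4))"
    by (simp add: diff_divide_distrib flip: exp_add)
  then show "explicitU n R r = 2 * sqrt 2 * exp (R\<^sup>2 / 4) / (R * wronskW n (R\<^sup>2 / 4))
      * radial_lift (vanishing_kummer n R 0) r"
    by (simp add: explicitU_def radial_lift_def vanishing_kummer_def tricomiU_eq_tricomiU_deriv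
        kummerM_eq_kummerM_deriv mult_ac)
qed

lemma explicitU_radial_ode:
  assumes n: "1 \<le> n" and R: "0 < R"
  obtains y' y'' where "radial_ode (real n) {0<..} (explicitU n R) y' y''" and "y' R = sqrt 2"
proof -
  define K where "K = 2 * sqrt 2 * exp (R\<^sup>2 / 4) / (R * wronskW n (R\<^sup>2 / 4))"
  define w where "w = vanishing_kummer n R"
  have "radial_ode (real n) {0<..} (\<lambda>r. K * radial_lift (w 0) r)
      (\<lambda>r. K * radial_lift_deriv (w 0) (w 1) r) (\<lambda>r. K * radial_lift_deriv2 (w 0) (w 1) (w 2) r)"
    unfolding w_def using n by (intro radial_ode_cmult radial_ode_radial_lift kummer_ode_vanishing_kummer)
  moreover have "K * radial_lift_deriv (w 0) (w 1) R = sqrt 2"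
  proof -
    have "wronskW n (R\<^sup>2 / 4) < 0" using R by (intro wronskW_neg[OF n]) simp
    moreover have "radial_lift_deriv (w 0) (w 1) R = exp (- (R\<^sup>2 / 4)) * (R / 2) * wronskW n (R\<^sup>2 / 4)"
      using R vanishing_kummer_deriv_at_R[OF n, of R] unfolding radial_lift_deriv_def w_def vanishing_kummer_at_R
      by simp
    ultimately show ?thesis
      using R unfolding K_def by (simp add: exp_minus field_simps)
  qed
  ultimately show thesis
    using that unfolding explicitU_eq_radial_lift K_def w_def by blast
qed

definition decaying_radial :: "nat \<Rightarrow> real \<Rightarrow> real"
  where "decaying_radial n = radial_lift (tricomiU_deriv ((real n + 1) / 2) (real n / 2) 0)"

definition decaying_radial_deriv :: "nat \<Rightarrow> real \<Rightarrow> real"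
  where "decaying_radial_deriv n = radial_lift_deriv (tricomiU_deriv ((real n + 1) / 2) (real n / 2) 0)
    (tricomiU_deriv ((real n + 1) / 2) (real n / 2) 1)"

lemma radial_ode_decaying_radial:
  "radial_ode (real n) {0<..} (decaying_radial n) (decaying_radial_deriv n)
    (radial_lift_deriv2 (tricomiU_deriv ((real n + 1) / 2) (real n / 2) 0)
      (tricomiU_deriv ((real n + 1) / 2) (real n / 2) 1) (tricomiU_deriv ((real n + 1) / 2) (real n / 2) 2))"
  unfolding decaying_radial_def decaying_radial_deriv_def
  by (intro radial_ode_radial_lift kummer_ode_tricomiU) (auto simp: field_simps)

lemma decaying_radial_pos: "r \<noteq> 0 \<Longrightarrow> decaying_radial n r > 0"
  unfolding decaying_radial_def radial_lift_def by (intro mult_pos_pos tricomiU_deriv_0_pos) (auto simp: field_simps)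

lemma decaying_radial_deriv_nonpos:
  assumes "r > 0"
  shows "decaying_radial_deriv n r \<le> 0"
proof -
  let ?U = "tricomiU_deriv ((real n + 1) / 2) (real n / 2)"
  have "?U 1 (r\<^sup>2 / 4) < 0" "?U 0 (r\<^sup>2 / 4) > 0"
    using assms by (intro tricomiU_deriv_1_neg tricomiU_deriv_0_pos; simp add: field_simps)+
  then show ?thesis
    using assms unfolding decaying_radial_deriv_def radial_lift_deriv_def
    by (intro mult_nonneg_nonpos) auto
qed

lemma decaying_radial_wronskian:
  assumes R: "0 < R" and ode: "radial_ode (real n) {R..} y y' y''"
    and y_R: "y R = 0" and y'_R: "y' R = sqrt 2" and "R \<le> r"
  shows "y' r * decaying_radial n r - y r * decaying_radial_deriv n r
    = sqrt 2 * tricomiU ((real n + 1) / 2) (real n / 2) (R\<^sup>2 / 4) * R powr (real n - 1) / radial_weight n r"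
proof -
  have "{R..} \<subseteq> {0<..}" using R by auto
  from radial_wronskian_const[OF R ode radial_ode_subset[OF radial_ode_decaying_radial this] \<open>R \<le> r\<close>]
  have "(y r * decaying_radial_deriv n r - decaying_radial n r * y' r) * radial_weight n r
      = - sqrt 2 * (decaying_radial n R * radial_weight n R)"
    by (simp add: y_R y'_R)
  also have "decaying_radial n R * radial_weight n R
      = tricomiU ((real n + 1) / 2) (real n / 2) (R\<^sup>2 / 4) * R powr (real n - 1)"
    by (simp add: decaying_radial_def radial_lift_def radial_weight_def tricomiU_eq_tricomiU_deriv
        exp_minus field_simps)
  finally show ?thesis
    using radial_weight_pos[of r n] R \<open>R \<le> r\<close> by (simp add: field_simps)
qed

lemma decaying_radial_quotient_tendsto:
  assumes R: "0 < R" and ode: "radial_ode (real n) {R..} y y' y''"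
    and y_R: "y R = 0" and y'_R: "y' R = sqrt 2"
  shows "((\<lambda>r. (y' r * decaying_radial n r - y r * decaying_radial_deriv n r)
      / (decaying_radial n r - r * decaying_radial_deriv n r)) \<longlongrightarrow>
    sqrt 2 * tricomiU ((real n + 1) / 2) (real n / 2) (R\<^sup>2 / 4) * R powr (real n - 1)
      / (2 powr (real n - 1) * 2)) at_top"
proof -
  let ?a = "(real n + 1) / 2" and ?b = "real n / 2"
  define U where "U = tricomiU_deriv ?a ?b"
  define E where "E = (\<lambda>s. s powr (?a - 1) * (U 0 s + 2 * s * (U 0 s - U 1 s)))"
  define c where "c = sqrt 2 * tricomiU ?a ?b (R\<^sup>2 / 4) * R powr (real n - 1)"
  have ratio: "(y' r * decaying_radial n r - y r * decaying_radial_deriv n r)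
      / (decaying_radial n r - r * decaying_radial_deriv n r) = c / (2 powr (real n - 1) * E (r\<^sup>2 / 4))"
    if "R \<le> r" for r
  proof -
    have "r > 0" using R that by simp
    define s where "s = r\<^sup>2 / 4"
    have "s > 0" using \<open>r > 0\<close> by (simp add: s_def)
    have W: "y' r * decaying_radial n r - y r * decaying_radial_deriv n r = c / radial_weight n r"
      using decaying_radial_wronskian[OF R ode y_R y'_R that] by (simp add: c_def)
    have D: "decaying_radial n r - r * decaying_radial_deriv n r = exp (- s) * (U 0 s + 2 * s * (U 0 s - U 1 s))"
      unfolding decaying_radial_def decaying_radial_deriv_def U_def s_def by (rule radial_lift_sub_mult_deriv)
    have P: "r powr (real n - 1) = 2 powr (real n - 1) * s powr (?a - 1)"
      using powr_eq_two_powr_mult_quarter_square_powr[OF \<open>r > 0\<close>, of "real n - 1"]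
      by (simp add: s_def field_simps)
    have "U 0 s + 2 * s * (U 0 s - U 1 s) > 0"
      unfolding U_def by (rule tricomiU_deriv_combination_pos) (use \<open>s > 0\<close> in \<open>auto simp: field_simps\<close>)
    then show ?thesis
      unfolding W D radial_weight_def P s_def[symmetric]
      using \<open>s > 0\<close> by (simp add: E_def exp_minus field_simps)
  qed
  have "(E \<longlongrightarrow> 2) at_top"
    unfolding E_def U_def by (rule tricomiU_deriv_combination_asymp) (auto simp: field_simps)
  moreover have "filterlim (\<lambda>r::real. r\<^sup>2 / 4) at_top at_top" by real_asymp
  ultimately have "((\<lambda>r. E (r\<^sup>2 / 4)) \<longlongrightarrow> 2) at_top"
    by (rule filterlim_compose)
  then have "((\<lambda>r. c / (2 powr (real n - 1) * E (r\<^sup>2 / 4))) \<longlongrightarrow> c / (2 powr (real n - 1) * 2)) at_top"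
    by (intro tendsto_intros) auto
  then show ?thesis
    unfolding c_def[symmetric]
    by (rule Lim_transform_eventually) (use eventually_ge_at_top[of R] in \<open>eventually_elim, simp add: ratio\<close>)
qed

lemma radial_solution_limit:
  assumes n: "1 \<le> n" and R: "0 < R" and ode: "radial_ode (real n) {R..} y y' y''"
    and y_R: "y R = 0" and y'_R: "y' R = sqrt 2"
  shows "((\<lambda>r. y r / r) \<longlongrightarrow>
    R ^ (n - 1) / 2 powr (real n - 1 / 2) * tricomiU ((real n + 1) / 2) (real n / 2) (R\<^sup>2 / 4)) at_top"
proof -
  let ?T = "tricomiU ((real n + 1) / 2) (real n / 2) (R\<^sup>2 / 4)"
  from decaying_radial_quotient_tendsto[OF R ode y_R y'_R]
  have "((\<lambda>r. y r / r) \<longlongrightarrow> sqrt 2 * ?T * R powr (real n - 1) / (2 powr (real n - 1) * 2)) at_top"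
  proof (rule lhospital_divide_ident_at_top[rotated])
    show "\<forall>\<^sub>F r in at_top. (y has_real_derivative y' r) (at r)
        \<and> (decaying_radial n has_real_derivative decaying_radial_deriv n r) (at r)
        \<and> 0 < decaying_radial n r \<and> decaying_radial_deriv n r \<le> 0"
      using eventually_ge_at_top[of R]
      by eventually_elim (use R radial_odeD(1)[OF ode] radial_odeD(1)[OF radial_ode_decaying_radial]
          decaying_radial_pos decaying_radial_deriv_nonpos in auto)
  qed
  moreover have "R powr (real n - 1) = R ^ (n - 1)"
    using R n by (simp add: powr_realpow[symmetric] of_nat_diff)
  moreover have "2 powr (real n - 1) * sqrt 2 = 2 powr (real n - 1 / 2)"
    by (simp add: powr_add[symmetric] powr_half_sqrt[symmetric])
  moreover have "sqrt 2 * ?T * R ^ (n - 1) / (2 powr (real n - 1) * 2)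
      = R ^ (n - 1) * ?T / (2 powr (real n - 1) * sqrt 2)"
    by (simp add: divide_simps)
  ultimately show ?thesis
    by (simp add: mult_ac)
qed

lemma is_solution_iff:
  "is_solution n R V \<longleftrightarrow> continuous_on {R..} V
    \<and> (\<exists>V' V''. radial_ode (real n) {R<..} V V' V'' \<and> continuous_on {R<..} V'')
    \<and> (\<forall>r\<ge>R. 0 \<le> V r) \<and> V R = 0 \<and> (V has_real_derivative sqrt 2) (at_right R)"
  unfolding is_solution_def radial_ode_def by auto

lemma is_solution_unique:
  assumes n: "1 \<le> n" and R: "0 < R" and V: "is_solution n R V" and W: "is_solution n R W" and "R \<le> r"
  shows "V r = W r"
proof -
  obtain V' V'' W' W'' where "radial_ode (real n) {R<..} V V' V''" "radial_ode (real n) {R<..} W W' W''"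
    using V W unfolding is_solution_iff by blast
  then have ode: "radial_ode (real n) {R<..} (\<lambda>r. V r - W r) (\<lambda>r. V' r - W' r) (\<lambda>r. V'' r - W'' r)"
    by (rule radial_ode_diff)
  have cont: "continuous_on {R..} (\<lambda>r. V r - W r)"
    using V W unfolding is_solution_iff by (auto intro: continuous_on_diff)
  have "(V has_real_derivative sqrt 2) (at_right R)" "(W has_real_derivative sqrt 2) (at_right R)"
    using V W unfolding is_solution_iff by auto
  from DERIV_diff[OF this] have deriv: "((\<lambda>r. V r - W r) has_real_derivative 0) (at_right R)"
    by simp
  have "V R - W R = 0"
    using V W unfolding is_solution_iff by simp
  from radial_ode_zero_initial_unique[OF _ R ode cont this deriv \<open>R \<le> r\<close>] n
  show ?thesis by simp
qed

lemma explicitU_at_R: "explicitU n R R = 0"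
  by (simp add: explicitU_def)

lemma explicitU_strict_mono:
  assumes n: "1 \<le> n" and R: "0 < R"
  shows "strict_mono_on {R..} (explicitU n R)"
proof -
  obtain y' y'' where ode: "radial_ode (real n) {0<..} (explicitU n R) y' y''" and y'_R: "y' R = sqrt 2"
    using explicitU_radial_ode[OF n R] .
  have ode_R: "radial_ode (real n) {R..} (explicitU n R) y' y''"
    by (rule radial_ode_subset[OF ode]) (use R in auto)
  have "y' r > 0" if "R \<le> r" for r
    by (rule radial_ode_deriv_pos[OF ode_R explicitU_at_R]) (use y'_R that in auto)
  with radial_odeD(1)[OF ode_R] show ?thesis
    by (intro strict_mono_on_if_deriv_pos[of R _ y']) auto
qed

lemma explicitU_pos:
  assumes "1 \<le> n" "0 < R" "R < r"
  shows "explicitU n R r > 0"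
  using strict_mono_onD[OF explicitU_strict_mono[OF assms(1,2)], of R r] assms(3) explicitU_at_R by simp

lemma is_solution_explicitU:
  assumes n: "1 \<le> n" and R: "0 < R"
  shows "is_solution n R (explicitU n R)"
proof -
  obtain y' y'' where ode: "radial_ode (real n) {0<..} (explicitU n R) y' y''" and y'_R: "y' R = sqrt 2"
    using explicitU_radial_ode[OF n R] .
  have ode_R: "radial_ode (real n) {R..} (explicitU n R) y' y''"
    by (rule radial_ode_subset[OF ode]) (use R in auto)
  show ?thesis
    unfolding is_solution_iff
  proof (intro conjI exI)
    show "continuous_on {R..} (explicitU n R)"
      by (rule radial_ode_continuous_on(1)[OF ode_R])
    show ode': "radial_ode (real n) {R<..} (explicitU n R) y' y''"
      by (rule radial_ode_subset[OF ode_R]) auto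
    show "continuous_on {R<..} y''"
      by (rule radial_ode_continuous_on_deriv2[OF ode']) (use R in auto)
    show "\<forall>r\<ge>R. 0 \<le> explicitU n R r"
      using explicitU_pos[OF n R] explicitU_at_R by (metis order.order_iff_strict order.refl)
    show "explicitU n R R = 0" by (rule explicitU_at_R)
    show "(explicitU n R has_real_derivative sqrt 2) (at_right R)"
      using radial_odeD(1)[OF ode_R, of R] y'_R by (auto intro: has_field_derivative_at_within)
  qed
qed

lemma explicitU_limit:
  assumes n: "1 \<le> n" and R: "0 < R"
  shows "((\<lambda>r. explicitU n R r / r) \<longlongrightarrow>
    R ^ (n - 1) / 2 powr (real n - 1 / 2) * tricomiU ((real n + 1) / 2) (real n / 2) (R\<^sup>2 / 4)) at_top"
proof -
  obtain y' y'' where ode: "radial_ode (real n) {0<..} (explicitU n R) y' y''" and y'_R: "y' R = sqrt 2"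
    using explicitU_radial_ode[OF n R] .
  have "radial_ode (real n) {R..} (explicitU n R) y' y''"
    by (rule radial_ode_subset[OF ode]) (use R in auto)
  from radial_solution_limit[OF n R this explicitU_at_R y'_R] show ?thesis .
qed

theorem lemma6p3:
  fixes n :: nat and R :: real
  assumes "n \<ge> 1" and "R > 0"
  shows "is_solution n R (explicitU n R)
    \<and> (\<forall>V. is_solution n R V \<longrightarrow> (\<forall>r\<ge>R. V r = explicitU n R r))
    \<and> (\<forall>r>R. explicitU n R r > 0)
    \<and> strict_mono_on {R<..} (explicitU n R)
    \<and> ((\<lambda>r. explicitU n R r / r) \<longlongrightarrow>
         R ^ (n - 1) / 2 powr (real n - 1/2) * tricomiU ((real n + 1) / 2) (real n / 2) (R^2/4)) at_top"
proof (intro conjI allI impI)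
  show sol: "is_solution n R (explicitU n R)"
    using assms by (rule is_solution_explicitU)
  show "V r = explicitU n R r" if "is_solution n R V" "R \<le> r" for V r
    using is_solution_unique[OF assms that(1) sol that(2)] .
  show "explicitU n R r > 0" if "R < r" for r
    using assms that by (rule explicitU_pos)
  show "strict_mono_on {R<..} (explicitU n R)"
    by (rule monotone_on_subset[OF explicitU_strict_mono[OF assms]]) auto
  show "((\<lambda>r. explicitU n R r / r) \<longlongrightarrow>
      R ^ (n - 1) / 2 powr (real n - 1/2) * tricomiU ((real n + 1) / 2) (real n / 2) (R^2/4)) at_top"
    using explicitU_limit[OF assms] .
qed

end
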